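(* Let $T$ be a complete theory with monster model $\mathcal{U}$, $M\prec\mathcal{U}$ a small elementary submodel, $\mu\in\mathfrak{M}_x(\mathcal{U})$, $\nu\in\mathfrak{M}_y(\mathcal{U})$. If $\mu$ is finitely satisfiable in $M$ and $\mu\geq_{\mathbb{E},M}\nu$, then $\nu$ is finitely satisfiable in $M$. Moreover, if $\mu$ is finitely satisfiable and $\mu\geq_{\mathbb{E}}\nu$, then $\nu$ is finitely satisfiable.
   Context: For $C\subseteq\mathcal{U}$, $\mathcal{L}_x(C)$ is the Boolean algebra of formulas in $x$ with parameters from $C$ modulo $T$, embedded in $\mathcal{L}_{xy}(C)$ via $\varphi(x)\mapsto\varphi(x)\wedge y=y$; $\mathfrak{M}_x(C)$ is the set of finitely additive probability measures on $\mathcal{L}_x(C)$. For $\omega\in\mathfrak{M}_{xy}(C)$, $\pi_x(\omega)(\varphi(x))=\omega(\varphi(x)\wedge y=y)$ (similarly $\pi_y$); $\omega|_D$ is restriction. For small $A$, $\mu\geq_{\mathbb{E},A}\nu$ means there is $\lambda\in\mathfrak{M}_{xy}(A)$ with $\pi_x(\lambda)=\mu|_A$ such that every $\omega\in\mathfrak{M}_{xy}(\mathcal{U})$ with $\omega|_A=\lambda$ and $\pi_x(\omega)=\mu$ satisfies $\pi_y(\omega)=\nu$; $\mu\geq_{\mathbb{E}}\nu$ means this for some small $A$. A global measure $\mu$ is finitely satisfiable in $M$ if every $\varphi(x)\in\mathcal{L}_x(\mathcal{U})$ with $\mu(\varphi(x))>0$ is realized by some tuple from $M$; it is finitely satisfiable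 if finitely satisfiable in some small $M\prec\mathcal{U}$. *)

theory Defs
  imports Complex_Main
begin

text \<open>Terms and formulas over function symbols of type 'f and relation symbols of
type 'r (symbols are not given fixed arities: each symbol may be applied to any number
of arguments, which is harmless).\<close>

datatype 'f trm = Var nat | Fn 'f "'f trm list"

datatype ('f, 'r) fm =
    FF
  | Eq "'f trm" "'f trm"
  | Rel 'r "'f trm list"
  | Neg "('f, 'r) fm"
  | Conj "('f, 'r) fm" "('f, 'r) fm"
  | Ex nat "('f, 'r) fm"

record ('a, 'f, 'r) struc =
  univ :: "'a set"
  fnc  :: "'f \<Rightarrow> 'a list \<Rightarrow> 'a"
  rel  :: "'r \<Rightarrow> 'a list \<Rightarrow> bool"

fun evalt :: "('a, 'f, 'r) struc \<Rightarrow> (nat \<Rightarrow> 'a) \<Rightarrow> 'f trm \<Rightarrow> 'a" where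
  "evalt S e (Var i) = e i"
| "evalt S e (Fn f ts) = fnc S f (map (evalt S e) ts)"

fun fvt :: "'f trm \<Rightarrow> nat set" where
  "fvt (Var i) = {i}"
| "fvt (Fn f ts) = (\<Union>t\<in>set ts. fvt t)"

fun sat :: "('a, 'f, 'r) struc \<Rightarrow> ('f, 'r) fm \<Rightarrow> (nat \<Rightarrow> 'a) \<Rightarrow> bool" where
  "sat S FF e = False"
| "sat S (Eq s t) e = (evalt S e s = evalt S e t)"
| "sat S (Rel r ts) e = rel S r (map (evalt S e) ts)"
| "sat S (Neg \<phi>) e = (\<not> sat S \<phi> e)"
| "sat S (Conj \<phi> \<psi>) e = (sat S \<phi> e \<and> sat S \<psi> e)"
| "sat S (Ex i \<phi>) e = (\<exists>a\<in>univ S. sat S \<phi> (e(i := a)))"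

fun fv :: "('f, 'r) fm \<Rightarrow> nat set" where
  "fv FF = {}"
| "fv (Eq s t) = fvt s \<union> fvt t"
| "fv (Rel r ts) = (\<Union>t\<in>set ts. fvt t)"
| "fv (Neg \<phi>) = fv \<phi>"
| "fv (Conj \<phi> \<psi>) = fv \<phi> \<union> fv \<psi>"
| "fv (Ex i \<phi>) = fv \<phi> - {i}"

definition wf_struc :: "('a, 'f, 'r) struc \<Rightarrow> bool" where
  "wf_struc S \<longleftrightarrow> univ S \<noteq> {} \<and>
     (\<forall>f as. set as \<subseteq> univ S \<longrightarrow> fnc S f as \<in> univ S)"

definition elem_sub :: "'a set \<Rightarrow> ('a, 'f, 'r) struc \<Rightarrow> bool" where
  "elem_sub M S \<longleftrightarrow> M \<subseteq> univ S \<and> M \<noteq> {} \<and>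
     (\<forall>f as. set as \<subseteq> M \<longrightarrow> fnc S f as \<in> M) \<and>
     (\<forall>(\<phi> :: ('f, 'r) fm) e. (\<forall>i. e i \<in> M) \<longrightarrow>
        (sat (S\<lparr>univ := M\<rparr>) \<phi> e \<longleftrightarrow> sat S \<phi> e))"

definition automorphism :: "('a, 'f, 'r) struc \<Rightarrow> ('a \<Rightarrow> 'a) \<Rightarrow> bool" where
  "automorphism S \<sigma> \<longleftrightarrow> bij_betw \<sigma> (univ S) (univ S) \<and>
     (\<forall>f as. set as \<subseteq> univ S \<longrightarrow> \<sigma> (fnc S f as) = fnc S f (map \<sigma> as)) \<and>
     (\<forall>r as. set as \<subseteq> univ S \<longrightarrow> (rel S r as \<longleftrightarrow> rel S r (map \<sigma> as)))"

text \<open>Smallness is measured against a cardinal given as the cardinality of a set K.\<close>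
definition small :: "'k set \<Rightarrow> 'a set \<Rightarrow> bool" where
  "small K A \<longleftrightarrow> (card_of A, card_of K) \<in> ordLess"

text \<open>A 1-type over A: a set of formulas (given with a parameter assignment), whose free
variables other than 0 are sent into A.\<close>
definition saturated :: "'k set \<Rightarrow> ('a, 'f, 'r) struc \<Rightarrow> bool" where
  "saturated K S \<longleftrightarrow>
     (\<forall>A P. A \<subseteq> univ S \<longrightarrow> small K A \<longrightarrow>
        (\<forall>(\<phi> :: ('f, 'r) fm, e) \<in> P. \<forall>i\<in>fv \<phi>. i \<noteq> 0 \<longrightarrow> e i \<in> A) \<longrightarrow>
        (\<forall>F. F \<subseteq> P \<longrightarrow> finite F \<longrightarrow>
           (\<exists>a\<in>univ S. \<forall>(\<phi>, e)\<in>F. sat S \<phi> (e(0 := a)))) \<longrightarrow>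
        (\<exists>a\<in>univ S. \<forall>(\<phi>, e)\<in>P. sat S \<phi> (e(0 := a))))"

definition partial_elementary :: "('a, 'f, 'r) struc \<Rightarrow> 'a set \<Rightarrow> ('a \<Rightarrow> 'a) \<Rightarrow> bool" where
  "partial_elementary S A f \<longleftrightarrow> f ` A \<subseteq> univ S \<and>
     (\<forall>(\<phi> :: ('f, 'r) fm) e. (\<forall>i\<in>fv \<phi>. e i \<in> A) \<longrightarrow>
        (sat S \<phi> e \<longleftrightarrow> sat S \<phi> (f \<circ> e)))"

definition strongly_homogeneous :: "'k set \<Rightarrow> ('a, 'f, 'r) struc \<Rightarrow> bool" where
  "strongly_homogeneous K S \<longleftrightarrow>
     (\<forall>A f. A \<subseteq> univ S \<longrightarrow> small K A \<longrightarrow> partial_elementary S A f \<longrightarrow>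
        (\<exists>\<sigma>. automorphism S \<sigma> \<and> (\<forall>a\<in>A. \<sigma> a = f a)))"

text \<open>S is a monster model (of its complete theory T = Th(S)) with respect to the
cardinal |K|: |K| is infinite and exceeds the size of the language, and S is
|K|-saturated and strongly |K|-homogeneous.\<close>
definition monster :: "'k set \<Rightarrow> ('a, 'f, 'r) struc \<Rightarrow> bool" where
  "monster K S \<longleftrightarrow> wf_struc S \<and> infinite K \<and>
     small K (UNIV :: 'f set) \<and> small K (UNIV :: 'r set) \<and>
     saturated K S \<and> strongly_homogeneous K S"

definition tup :: "('a, 'f, 'r) struc \<Rightarrow> nat \<Rightarrow> 'a list set" where
  "tup S n = {a. length a = n \<and> set a \<subseteq> univ S}"

definition asg :: "nat \<Rightarrow> 'a list \<Rightarrow> (nat \<Rightarrow> 'a) \<Rightarrow> nat \<Rightarrow> 'a" where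
  "asg n a e i = (if i < n then a ! i else e i)"

text \<open>The Boolean algebra \<open>L_x(C)\<close> (x an n-tuple of variables, namely variables 0..n-1)
of formulas with parameters from C modulo T, realised as the algebra of C-definable
subsets of the monster model (two such formulas are equivalent modulo T iff they
define the same subset of the monster).\<close>
definition defsets :: "('a, 'f, 'r) struc \<Rightarrow> nat \<Rightarrow> 'a set \<Rightarrow> 'a list set set" where
  "defsets S n C =
     {{a \<in> tup S n. sat S \<phi> (asg n a e)} | (\<phi> :: ('f, 'r) fm) e.
        \<forall>i\<in>fv \<phi>. n \<le> i \<longrightarrow> e i \<in> C}"

text \<open>Finitely additive probability measures on \<open>L_x(C)\<close> (only the values on
definable sets are relevant).\<close>
definition keisler :: "('a, 'f, 'r) struc \<Rightarrow> nat \<Rightarrow> 'a set \<Rightarrow> ('a list set \<Rightarrow> real) \<Rightarrow> bool" where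
  "keisler S n C \<mu> \<longleftrightarrow>
     (\<forall>D\<in>defsets S n C. 0 \<le> \<mu> D) \<and> \<mu> (tup S n) = 1 \<and>
     (\<forall>D\<in>defsets S n C. \<forall>E\<in>defsets S n C. D \<inter> E = {} \<longrightarrow> \<mu> (D \<union> E) = \<mu> D + \<mu> E)"

definition pix :: "('a, 'f, 'r) struc \<Rightarrow> nat \<Rightarrow> nat \<Rightarrow> ('a list set \<Rightarrow> real) \<Rightarrow> 'a list set \<Rightarrow> real" where
  "pix S n m \<omega> D = \<omega> {a @ b | a b. a \<in> D \<and> b \<in> tup S m}"

definition piy :: "('a, 'f, 'r) struc \<Rightarrow> nat \<Rightarrow> nat \<Rightarrow> ('a list set \<Rightarrow> real) \<Rightarrow> 'a list set \<Rightarrow> real" where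
  "piy S n m \<omega> D = \<omega> {a @ b | a b. a \<in> tup S n \<and> b \<in> D}"

definition edom_at :: "('a, 'f, 'r) struc \<Rightarrow> nat \<Rightarrow> nat \<Rightarrow> 'a set \<Rightarrow>
    ('a list set \<Rightarrow> real) \<Rightarrow> ('a list set \<Rightarrow> real) \<Rightarrow> bool" where
  "edom_at S n m A \<mu> \<nu> \<longleftrightarrow>
     (\<exists>lam. keisler S (n + m) A lam \<and>
        (\<forall>D\<in>defsets S n A. pix S n m lam D = \<mu> D) \<and>
        (\<forall>\<omega>. keisler S (n + m) (univ S) \<omega> \<longrightarrow>
           (\<forall>D\<in>defsets S (n + m) A. \<omega> D = lam D) \<longrightarrow>
           (\<forall>D\<in>defsets S n (univ S). pix S n m \<omega> D = \<mu> D) \<longrightarrow>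
           (\<forall>D\<in>defsets S m (univ S). piy S n m \<omega> D = \<nu> D)))"

definition edom :: "'k set \<Rightarrow> ('a, 'f, 'r) struc \<Rightarrow> nat \<Rightarrow> nat \<Rightarrow>
    ('a list set \<Rightarrow> real) \<Rightarrow> ('a list set \<Rightarrow> real) \<Rightarrow> bool" where
  "edom K S n m \<mu> \<nu> \<longleftrightarrow> (\<exists>A. A \<subseteq> univ S \<and> small K A \<and> edom_at S n m A \<mu> \<nu>)"

definition fin_sat_in :: "('a, 'f, 'r) struc \<Rightarrow> nat \<Rightarrow> 'a set \<Rightarrow> ('a list set \<Rightarrow> real) \<Rightarrow> bool" where
  "fin_sat_in S n M \<mu> \<longleftrightarrow>
     (\<forall>D\<in>defsets S n (univ S). 0 < \<mu> D \<longrightarrow> (\<exists>a\<in>D. set a \<subseteq> M))"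

definition fin_sat :: "'k set \<Rightarrow> ('a, 'f, 'r) struc \<Rightarrow> nat \<Rightarrow> ('a list set \<Rightarrow> real) \<Rightarrow> bool" where
  "fin_sat K S n \<mu> \<longleftrightarrow> (\<exists>M. elem_sub M S \<and> small K M \<and> fin_sat_in S n M \<mu>)"

end

theory Submission
  imports Defs "HOL-Analysis.Analysis"
begin

(* Let lam over A \<subseteq> M witness \<mu> \<ge>_{E,M} \<nu>. We build a global \<omega> in x y that extends lam,
   has x-marginal \<mu> and is itself finitely satisfiable in M; its y-marginal is then \<nu>, which
   inherits finite satisfiability. The measure \<omega> is a compactness limit, in [0,1]^(sets of tuples),
   of finitely supported measures on M-tuples. For finitely many constraints, take the atoms p of
   the lam-sets, the atoms r of the \<mu>-sets and the atoms q generated by the projections of the p;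
   gluing lam (p \<inter> cyl q) with \<mu> (q \<inter> r) along q gives weights that are positive only when
   q \<subseteq> proj p and \<mu> (q \<inter> r) > 0. Then q \<inter> r contains an M-tuple a (finite satisfiability of
   \<mu>), a lies in proj p, and as p is M-definable and M \<prec> U some M-tuple b has a @ b \<in> p; the weight
   is put on a @ b.
   For the second statement, downward Loewenheim-Skolem yields a small model containing both the
   model in which \<mu> is finitely satisfiable and the parameters of lam (if the smallness bound
   is countable, small models are finite, hence equal to U, and there is nothing to prove). *)

section \<open>Renaming variables and blocks of quantifiers\<close>

fun rename_trm :: "(nat \<Rightarrow> nat) \<Rightarrow> 'f trm \<Rightarrow> 'f trm" where
  "rename_trm g (Var i) = Var (g i)"
| "rename_trm g (Fn f ts) = Fn f (map (rename_trm g) ts)"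

fun rename_fm :: "(nat \<Rightarrow> nat) \<Rightarrow> ('f, 'r) fm \<Rightarrow> ('f, 'r) fm" where
  "rename_fm g FF = FF"
| "rename_fm g (Eq s t) = Eq (rename_trm g s) (rename_trm g t)"
| "rename_fm g (Rel r ts) = Rel r (map (rename_trm g) ts)"
| "rename_fm g (Neg \<phi>) = Neg (rename_fm g \<phi>)"
| "rename_fm g (Conj \<phi> \<psi>) = Conj (rename_fm g \<phi>) (rename_fm g \<psi>)"
| "rename_fm g (Ex i \<phi>) = Ex (g i) (rename_fm g \<phi>)"

lemma evalt_rename_trm: "evalt S e (rename_trm g t) = evalt S (e \<circ> g) t"
  by (induction t) (auto cong: map_cong)

lemma fvt_rename_trm: "fvt (rename_trm g t) = g ` fvt t"
  by (induction t) auto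

lemma sat_rename_fm: "inj g \<Longrightarrow> sat S (rename_fm g \<phi>) e \<longleftrightarrow> sat S \<phi> (e \<circ> g)"
proof (induction \<phi> arbitrary: e)
  case (Ex i \<phi>)
  have "e(g i := a) \<circ> g = (e \<circ> g)(i := a)" for a
    using Ex.prems by (auto simp: fun_eq_iff inj_eq)
  then have "sat S (rename_fm g \<phi>) (e(g i := a)) \<longleftrightarrow> sat S \<phi> ((e \<circ> g)(i := a))" for a
    using Ex.IH[OF Ex.prems, of "e(g i := a)"] by metis
  then show ?case by (simp only: rename_fm.simps sat.simps)
qed (auto simp: evalt_rename_trm comp_def)

lemma fv_rename_fm: "inj g \<Longrightarrow> fv (rename_fm g \<phi>) = g ` fv \<phi>"
proof (induction \<phi>)
  case (Ex i \<phi>)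
  then show ?case by (auto simp: inj_eq)
qed (auto simp: fvt_rename_trm)

lemma evalt_cong: "(\<forall>i\<in>fvt t. e i = e' i) \<Longrightarrow> evalt S e t = evalt S e' t"
  by (induction t) (auto cong: map_cong)

lemma sat_cong: "(\<forall>i\<in>fv \<phi>. e i = e' i) \<Longrightarrow> sat S \<phi> e \<longleftrightarrow> sat S \<phi> e'"
proof (induction \<phi> arbitrary: e e')
  case (Eq s t)
  then show ?case using evalt_cong[of s e e' S] evalt_cong[of t e e' S] by auto
next
  case (Rel r ts)
  then have "map (evalt S e) ts = map (evalt S e') ts"
    using evalt_cong[of _ e e' S] by (auto simp: map_eq_conv)
  then show ?case by (simp only: sat.simps)
next
  case (Conj \<phi>1 \<phi>2)
  then show ?case by (metis UnCI fv.simps(5) sat.simps(5))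
next
  case (Ex i \<phi>)
  then have "sat S \<phi> (e(i := a)) \<longleftrightarrow> sat S \<phi> (e'(i := a))" for a
    by (intro Ex.IH) auto
  then show ?case by simp
qed auto

lemma evalt_univ_update: "evalt (S\<lparr>univ := U\<rparr>) e t = evalt S e t"
  by (induction t) (auto cong: map_cong)

lemma finite_fvt: "finite (fvt t)"
  by (induction t) auto

lemma finite_fv: "finite (fv \<phi>)"
  by (induction \<phi>) (auto simp: finite_fvt)

fun Ex_list :: "nat list \<Rightarrow> ('f, 'r) fm \<Rightarrow> ('f, 'r) fm" where
  "Ex_list [] \<phi> = \<phi>"
| "Ex_list (i # is) \<phi> = Ex i (Ex_list is \<phi>)"

lemma fv_Ex_list: "fv (Ex_list is \<phi>) = fv \<phi> - set is"
  by (induction "is") auto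

lemma tup_Suc_iff: "c \<in> tup S (Suc m) \<longleftrightarrow> (\<exists>a b. c = a # b \<and> a \<in> univ S \<and> b \<in> tup S m)"
  unfolding tup_def by (cases c) auto

lemma tup_add_iff: "c \<in> tup S (n + m) \<longleftrightarrow> (\<exists>a b. c = a @ b \<and> a \<in> tup S n \<and> b \<in> tup S m)"
proof
  assume "c \<in> tup S (n + m)"
  then show "\<exists>a b. c = a @ b \<and> a \<in> tup S n \<and> b \<in> tup S m"
    unfolding tup_def
    by (intro exI[of _ "take n c"] exI[of _ "drop n c"]) (auto dest: in_set_takeD in_set_dropD)
qed (auto simp: tup_def)

lemma sat_Ex_list_upt:
  "sat S (Ex_list [k..<k + m] \<phi>) e \<longleftrightarrow>
     (\<exists>b\<in>tup S m. sat S \<phi> (\<lambda>i. if k \<le> i \<and> i < k + m then b ! (i - k) else e i))"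
proof (induction m arbitrary: k e)
  case 0
  have "tup S 0 = {[]}" unfolding tup_def by auto
  moreover have "(\<lambda>i. if k \<le> i \<and> i < k + 0 then b ! (i - k) else e i) = e" for b :: "'a list"
    by (rule ext) auto
  ultimately show ?case by simp
next
  case (Suc m)
  have upt: "[k..<k + Suc m] = k # [Suc k..<Suc k + m]"
    by (simp add: upt_conv_Cons)
  have "(\<lambda>i. if Suc k \<le> i \<and> i < Suc k + m then b ! (i - Suc k) else (e(k := a)) i)
      = (\<lambda>i. if k \<le> i \<and> i < k + Suc m then (a # b) ! (i - k) else e i)" for a b
  proof
    fix i
    show "(if Suc k \<le> i \<and> i < Suc k + m then b ! (i - Suc k) else (e(k := a)) i)
      = (if k \<le> i \<and> i < k + Suc m then (a # b) ! (i - k) else e i)"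
      by (auto simp: nth_Cons' diff_diff_left)
  qed
  then have "sat S (Ex_list [k..<k + Suc m] \<phi>) e \<longleftrightarrow>
      (\<exists>a\<in>univ S. \<exists>b\<in>tup S m. sat S \<phi> (\<lambda>i. if k \<le> i \<and> i < k + Suc m then (a # b) ! (i - k) else e i))"
    unfolding upt using Suc.IH[of "Suc k"] by simp
  also have "\<dots> \<longleftrightarrow> (\<exists>c\<in>tup S (Suc m). sat S \<phi> (\<lambda>i. if k \<le> i \<and> i < k + Suc m then c ! (i - k) else e i))"
    unfolding Bex_def tup_Suc_iff by blast
  finally show ?case .
qed

section \<open>Definable sets, cylinders and projections\<close>

definition defset :: "('a, 'f, 'r) struc \<Rightarrow> nat \<Rightarrow> ('f, 'r) fm \<Rightarrow> (nat \<Rightarrow> 'a) \<Rightarrow> 'a list set" where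
  "defset S k \<phi> e = {a \<in> tup S k. sat S \<phi> (asg k a e)}"

lemma defsets_iff:
  fixes S :: "('a, 'f, 'r) struc"
  shows "D \<in> defsets S k C \<longleftrightarrow>
    (\<exists>(\<phi> :: ('f, 'r) fm) e. (\<forall>i\<in>fv \<phi>. k \<le> i \<longrightarrow> e i \<in> C) \<and> D = defset S k \<phi> e)"
  unfolding defsets_def defset_def by auto

lemma defsetI:
  fixes S :: "('a, 'f, 'r) struc" and \<phi> :: "('f, 'r) fm"
  shows "\<forall>i\<in>fv \<phi>. k \<le> i \<longrightarrow> e i \<in> C \<Longrightarrow> defset S k \<phi> e \<in> defsets S k C"
  unfolding defsets_iff by blast

lemma defsetsE:
  fixes S :: "('a, 'f, 'r) struc"
  assumes "D \<in> defsets S k C"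
  obtains \<phi> :: "('f, 'r) fm" and e where "\<forall>i\<in>fv \<phi>. k \<le> i \<longrightarrow> e i \<in> C" "D = defset S k \<phi> e"
  using assms unfolding defsets_iff by blast

lemma defsets_mono: "C \<subseteq> C' \<Longrightarrow> defsets S k C \<subseteq> defsets S k C'"
  unfolding defsets_def by blast

text \<open>For the intersection, the parameters of the two formulas are merged by sending the
  parameter variables of the first to even and those of the second to odd positions.\<close>
lemma defsets_Int:
  fixes S :: "('a, 'f, 'r) struc"
  assumes "D1 \<in> defsets S k C" "D2 \<in> defsets S k C"
  shows "D1 \<inter> D2 \<in> defsets S k C"
proof -
  obtain \<phi>1 :: "('f, 'r) fm" and e1 where
    h1: "\<forall>i\<in>fv \<phi>1. k \<le> i \<longrightarrow> e1 i \<in> C" "D1 = defset S k \<phi>1 e1"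
    using assms(1) by (rule defsetsE)
  obtain \<phi>2 :: "('f, 'r) fm" and e2 where
    h2: "\<forall>i\<in>fv \<phi>2. k \<le> i \<longrightarrow> e2 i \<in> C" "D2 = defset S k \<phi>2 e2"
    using assms(2) by (rule defsetsE)
  define g1 where "g1 i = (if i < k then i else k + 2 * (i - k))" for i
  define g2 where "g2 i = (if i < k then i else k + 2 * (i - k) + 1)" for i
  define e where "e j = (if even (j - k) then e1 (k + (j - k) div 2) else e2 (k + (j - k) div 2))" for j
  have inj: "inj g1" "inj g2" unfolding g1_def g2_def inj_def by auto
  have "asg k a e \<circ> g1 = asg k a e1" "asg k a e \<circ> g2 = asg k a e2" for a
    by (auto simp: fun_eq_iff asg_def g1_def g2_def e_def)
  then have "D1 \<inter> D2 = defset S k (Conj (rename_fm g1 \<phi>1) (rename_fm g2 \<phi>2)) e"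
    using h1(2) h2(2) unfolding defset_def by (auto simp: sat_rename_fm inj)
  also have "\<dots> \<in> defsets S k C"
    using h1(1) h2(1) by (intro defsetI) (auto simp: fv_rename_fm inj g1_def g2_def e_def)
  finally show ?thesis .
qed

lemma algebra_defsets:
  fixes S :: "('a, 'f, 'r) struc"
  shows "algebra (tup S k) (defsets S k C)"
proof -
  have "tup S k - defset S k \<phi> e = defset S k (Neg \<phi>) e" for \<phi> :: "('f, 'r) fm" and e
    unfolding defset_def by auto
  then have "tup S k - D \<in> defsets S k C" if "D \<in> defsets S k C" for D
    using that by (auto elim!: defsetsE intro!: defsetI)
  moreover have "{} = defset S k (FF :: ('f, 'r) fm) e" for e
    unfolding defset_def by auto
  then have "{} \<in> defsets S k C"
    by (metis defsetI empty_iff fv.simps(1))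
  moreover have "defsets S k C \<subseteq> Pow (tup S k)"
    unfolding defsets_def by auto
  ultimately show ?thesis
    unfolding algebra_iff_Int by (auto intro: defsets_Int)
qed

definition xcyl :: "('a, 'f, 'r) struc \<Rightarrow> nat \<Rightarrow> 'a list set \<Rightarrow> 'a list set" where
  "xcyl S m D = {a @ b |a b. a \<in> D \<and> b \<in> tup S m}"

definition ycyl :: "('a, 'f, 'r) struc \<Rightarrow> nat \<Rightarrow> 'a list set \<Rightarrow> 'a list set" where
  "ycyl S n D = {a @ b |a b. a \<in> tup S n \<and> b \<in> D}"

definition xproj :: "('a, 'f, 'r) struc \<Rightarrow> nat \<Rightarrow> nat \<Rightarrow> 'a list set \<Rightarrow> 'a list set" where
  "xproj S n m D = {a \<in> tup S n. \<exists>b\<in>tup S m. a @ b \<in> D}"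

lemma pix_eq_xcyl: "pix S n m \<omega> D = \<omega> (xcyl S m D)"
  unfolding pix_def xcyl_def ..

lemma piy_eq_ycyl: "piy S n m \<omega> D = \<omega> (ycyl S n D)"
  unfolding piy_def ycyl_def ..

lemma defsets_xcyl:
  fixes S :: "('a, 'f, 'r) struc"
  assumes "D \<in> defsets S n C"
  shows "xcyl S m D \<in> defsets S (n + m) C"
proof -
  obtain \<phi> :: "('f, 'r) fm" and e where
    h: "\<forall>i\<in>fv \<phi>. n \<le> i \<longrightarrow> e i \<in> C" "D = defset S n \<phi> e"
    using assms by (rule defsetsE)
  define g where "g i = (if i < n then i else i + m)" for i
  define e' where "e' j = e (j - m)" for j
  have "inj g" unfolding g_def inj_def by auto
  have shift: "asg (n + m) c e' \<circ> g = asg n (take n c) e" if "length c = n + m" for c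
    using that by (auto simp: fun_eq_iff asg_def g_def e'_def)
  have "xcyl S m D = defset S (n + m) (rename_fm g \<phi>) e'"
  proof safe
    fix c assume "c \<in> xcyl S m D"
    then obtain a b where ab: "c = a @ b" "a \<in> D" "b \<in> tup S m" unfolding xcyl_def by auto
    then have a: "a \<in> tup S n" "sat S \<phi> (asg n a e)" using h(2) unfolding defset_def by auto
    have "c \<in> tup S (n + m)" using ab a tup_add_iff by blast
    moreover have "take n c = a" using ab a by (simp add: tup_def)
    ultimately show "c \<in> defset S (n + m) (rename_fm g \<phi>) e'"
      unfolding defset_def using a shift[of c] \<open>inj g\<close> by (simp add: sat_rename_fm tup_def)
  next
    fix c assume "c \<in> defset S (n + m) (rename_fm g \<phi>) e'"
    then have c: "c \<in> tup S (n + m)" "sat S \<phi> (asg n (take n c) e)"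
      unfolding defset_def using shift[of c] \<open>inj g\<close> by (auto simp: sat_rename_fm tup_def)
    then obtain a b where ab: "c = a @ b" "a \<in> tup S n" "b \<in> tup S m" using tup_add_iff by blast
    then have "a \<in> D" using h(2) c by (simp add: defset_def tup_def)
    then show "c \<in> xcyl S m D" using ab unfolding xcyl_def by auto
  qed
  also have "\<dots> \<in> defsets S (n + m) C"
    using h(1) \<open>inj g\<close> by (intro defsetI) (auto simp: fv_rename_fm g_def e'_def)
  finally show ?thesis .
qed

lemma defsets_ycyl:
  fixes S :: "('a, 'f, 'r) struc"
  assumes "D \<in> defsets S m C"
  shows "ycyl S n D \<in> defsets S (n + m) C"
proof -
  obtain \<phi> :: "('f, 'r) fm" and e where
    h: "\<forall>i\<in>fv \<phi>. m \<le> i \<longrightarrow> e i \<in> C" "D = defset S m \<phi> e"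
    using assms by (rule defsetsE)
  define g where "g i = i + n" for i
  define e' where "e' j = e (j - n)" for j
  have "inj g" unfolding g_def inj_def by auto
  have shift: "asg (n + m) c e' \<circ> g = asg m (drop n c) e" if "length c = n + m" for c
    using that by (auto simp: fun_eq_iff asg_def g_def e'_def add.commute)
  have "ycyl S n D = defset S (n + m) (rename_fm g \<phi>) e'"
  proof safe
    fix c assume "c \<in> ycyl S n D"
    then obtain a b where ab: "c = a @ b" "b \<in> D" "a \<in> tup S n" unfolding ycyl_def by auto
    then have b: "b \<in> tup S m" "sat S \<phi> (asg m b e)" using h(2) unfolding defset_def by auto
    have "c \<in> tup S (n + m)" using ab b tup_add_iff by blast
    moreover have "drop n c = b" using ab by (simp add: tup_def)
    ultimately show "c \<in> defset S (n + m) (rename_fm g \<phi>) e'"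
      unfolding defset_def using b shift[of c] \<open>inj g\<close> by (simp add: sat_rename_fm tup_def)
  next
    fix c assume "c \<in> defset S (n + m) (rename_fm g \<phi>) e'"
    then have c: "c \<in> tup S (n + m)" "sat S \<phi> (asg m (drop n c) e)"
      unfolding defset_def using shift[of c] \<open>inj g\<close> by (auto simp: sat_rename_fm tup_def)
    then obtain a b where ab: "c = a @ b" "a \<in> tup S n" "b \<in> tup S m" using tup_add_iff by blast
    then have "b \<in> D" using h(2) c by (simp add: defset_def tup_def)
    then show "c \<in> ycyl S n D" using ab unfolding ycyl_def by auto
  qed
  also have "\<dots> \<in> defsets S (n + m) C"
    using h(1) \<open>inj g\<close> by (intro defsetI) (auto simp: fv_rename_fm g_def e'_def)
  finally show ?thesis .
qed

lemma asg_append_eq: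
  "length a = n \<Longrightarrow>
    (\<lambda>i. if n \<le> i \<and> i < n + m then b ! (i - n) else asg n a e i) = asg (n + m) (a @ b) e"
  by (auto simp: fun_eq_iff asg_def nth_append)

lemma sat_Ex_list_asg:
  "length a = n \<Longrightarrow>
    sat S (Ex_list [n..<n + m] \<phi>) (asg n a e) \<longleftrightarrow> (\<exists>b\<in>tup S m. sat S \<phi> (asg (n + m) (a @ b) e))"
  by (simp only: sat_Ex_list_upt asg_append_eq)

lemma defsets_xproj:
  fixes S :: "('a, 'f, 'r) struc"
  assumes "D \<in> defsets S (n + m) C"
  shows "xproj S n m D \<in> defsets S n C"
proof -
  obtain \<phi> :: "('f, 'r) fm" and e where
    h: "\<forall>i\<in>fv \<phi>. n + m \<le> i \<longrightarrow> e i \<in> C" "D = defset S (n + m) \<phi> e"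
    using assms by (rule defsetsE)
  have "xproj S n m D = defset S n (Ex_list [n..<n + m] \<phi>) e"
    using h(2) unfolding xproj_def defset_def
    by (auto simp: sat_Ex_list_asg tup_add_iff tup_def)
  also have "\<dots> \<in> defsets S n C"
    using h(1) by (intro defsetI) (auto simp: fv_Ex_list)
  finally show ?thesis .
qed

lemma elem_sub_extend_tuple:
  fixes S :: "('a, 'f, 'r) struc"
  assumes em: "elem_sub M S" and D: "D \<in> defsets S (n + m) M"
    and a: "a \<in> xproj S n m D" "set a \<subseteq> M"
  shows "\<exists>b\<in>tup S m. set b \<subseteq> M \<and> a @ b \<in> D"
proof -
  obtain \<phi> :: "('f, 'r) fm" and e where
    h: "\<forall>i\<in>fv \<phi>. n + m \<le> i \<longrightarrow> e i \<in> M" "D = defset S (n + m) \<phi> e"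
    using D by (rule defsetsE)
  have MU: "M \<subseteq> univ S" and "M \<noteq> {}" using em unfolding elem_sub_def by auto
  then obtain c0 where c0: "c0 \<in> M" by auto
  define e' where "e' i = (if i \<in> fv \<phi> \<and> n + m \<le> i then e i else c0)" for i
  have e'M: "e' i \<in> M" for i using h(1) c0 unfolding e'_def by auto
  have "sat S \<phi> (asg (n + m) c e) = sat S \<phi> (asg (n + m) c e')" for c
    by (rule sat_cong) (auto simp: asg_def e'_def)
  then have D': "D = defset S (n + m) \<phi> e'" using h(2) unfolding defset_def by auto
  have la: "length a = n" using a unfolding xproj_def tup_def by auto
  have aM: "\<forall>i. asg n a e' i \<in> M"
    using a e'M la by (auto simp: asg_def)
  have "sat S (Ex_list [n..<n + m] \<phi>) (asg n a e')"
    using a D' la unfolding xproj_def defset_def by (auto simp: sat_Ex_list_asg)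
  then have "sat (S\<lparr>univ := M\<rparr>) (Ex_list [n..<n + m] \<phi>) (asg n a e')"
    using em aM unfolding elem_sub_def by blast
  then obtain b where b: "b \<in> tup (S\<lparr>univ := M\<rparr>) m" "sat (S\<lparr>univ := M\<rparr>) \<phi> (asg (n + m) (a @ b) e')"
    using la by (auto simp: sat_Ex_list_asg)
  have bM: "set b \<subseteq> M" "length b = m" using b(1) by (auto simp: tup_def)
  have "\<forall>i. asg (n + m) (a @ b) e' i \<in> M"
    using a e'M la bM by (auto simp: asg_def nth_append dest!: nth_mem)
  then have "sat S \<phi> (asg (n + m) (a @ b) e')"
    using em b(2) unfolding elem_sub_def by blast
  moreover have "a @ b \<in> tup S (n + m)"
    using a bM MU la by (auto simp: tup_def xproj_def)
  ultimately show ?thesis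
    using D' bM MU unfolding defset_def tup_def by auto
qed

lemma append_in_xcyl_iff:
  "length a = n \<Longrightarrow> b \<in> tup S m \<Longrightarrow> D \<subseteq> tup S n \<Longrightarrow> a @ b \<in> xcyl S m D \<longleftrightarrow> a \<in> D"
  unfolding xcyl_def tup_def by auto

lemma xcyl_Int:
  assumes "D \<subseteq> tup S n" "D' \<subseteq> tup S n"
  shows "xcyl S m D \<inter> xcyl S m D' = xcyl S m (D \<inter> D')"
proof (intro equalityI subsetI)
  fix c assume "c \<in> xcyl S m D \<inter> xcyl S m D'"
  then obtain a b a' b' where h: "c = a @ b" "a \<in> D" "b \<in> tup S m" "c = a' @ b'" "a' \<in> D'"
    unfolding xcyl_def by blast
  moreover have "length a = n" "length a' = n"
    using h assms by (auto simp: tup_def)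
  ultimately have "a = a'"
    by (metis append_eq_append_conv)
  then show "c \<in> xcyl S m (D \<inter> D')"
    using h unfolding xcyl_def by blast
qed (auto simp: xcyl_def)

lemma xcyl_empty [simp]: "xcyl S m {} = {}"
  unfolding xcyl_def by simp

lemma xcyl_mono: "D \<subseteq> D' \<Longrightarrow> xcyl S m D \<subseteq> xcyl S m D'"
  unfolding xcyl_def by auto

lemma disjoint_family_on_xcyl:
  assumes "disjoint_family_on (\<lambda>q. q) \<Q>" "\<And>q. q \<in> \<Q> \<Longrightarrow> q \<subseteq> tup S n"
  shows "disjoint_family_on (xcyl S m) \<Q>"
  using assms xcyl_Int[of _ S n _ m] unfolding disjoint_family_on_def by (metis xcyl_empty)

lemma tup_subset_UN_xcyl:
  assumes "tup S n \<subseteq> \<Union>\<Q>"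
  shows "tup S (n + m) \<subseteq> (\<Union>q\<in>\<Q>. xcyl S m q)"
proof
  fix c assume "c \<in> tup S (n + m)"
  then obtain a b where ab: "c = a @ b" "a \<in> tup S n" "b \<in> tup S m"
    unfolding tup_add_iff by blast
  then obtain q where "q \<in> \<Q>" "a \<in> q"
    using assms by blast
  then show "c \<in> (\<Union>q\<in>\<Q>. xcyl S m q)"
    using ab unfolding xcyl_def by blast
qed

lemma xproj_meets_if_xcyl_meets:
  assumes "p \<subseteq> tup S (n + m)" "p \<inter> xcyl S m q \<noteq> {}"
  shows "xproj S n m p \<inter> q \<noteq> {}"
proof -
  obtain a b where ab: "a @ b \<in> p" "a \<in> q" "b \<in> tup S m"
    using assms(2) unfolding xcyl_def by blast
  then have "a @ b \<in> tup S (n + m)"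
    using assms(1) by blast
  then have "a \<in> tup S n"
    using ab(3) by (simp add: tup_def)
  then show ?thesis
    using ab unfolding xproj_def by blast
qed

lemma xcyl_mem_iff_subset:
  assumes "c \<in> xcyl S m r" "r \<subseteq> tup S n" "D \<subseteq> tup S n" "r \<subseteq> D \<or> r \<inter> D = {}"
  shows "c \<in> xcyl S m D \<longleftrightarrow> r \<subseteq> D"
proof -
  obtain a b where ab: "c = a @ b" "a \<in> r" "b \<in> tup S m"
    using assms(1) unfolding xcyl_def by blast
  then have "length a = n"
    using assms(2) by (auto simp: tup_def)
  then have "c \<in> xcyl S m D \<longleftrightarrow> a \<in> D"
    using ab(1,3) assms(3) by (simp add: append_in_xcyl_iff)
  then show ?thesis
    using ab(2) assms(4) by blast
qed

section \<open>Additive set functions, atoms and gluing\<close>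

lemma (in ring_of_sets) additive_empty:
  fixes \<mu> :: "'a set \<Rightarrow> 'b::cancel_comm_monoid_add"
  shows "additive M \<mu> \<Longrightarrow> \<mu> {} = 0"
  using additiveD[of M \<mu> "{}" "{}"] by simp

lemma (in ring_of_sets) additive_sum_disjoint:
  fixes \<mu> :: "'a set \<Rightarrow> 'b::cancel_comm_monoid_add" and A :: "'i \<Rightarrow> 'a set"
  assumes "additive M \<mu>" "finite I" "A ` I \<subseteq> M" "disjoint_family_on A I"
  shows "(\<Sum>i\<in>I. \<mu> (A i)) = \<mu> (\<Union>i\<in>I. A i)"
  using assms(2-4)
proof (induction I rule: finite_induct)
  case empty
  then show ?case using additive_empty[OF assms(1)] by simp
next
  case (insert j I)
  have "A j \<inter> (\<Union>i\<in>I. A i) = {}"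
    using insert.hyps(2) insert.prems(2) by (auto simp: disjoint_family_on_def)
  moreover have "(\<Union>i\<in>I. A i) \<in> M"
    using insert.prems(1) insert.hyps(1) by auto
  ultimately have "\<mu> (A j \<union> (\<Union>i\<in>I. A i)) = \<mu> (A j) + \<mu> (\<Union>i\<in>I. A i)"
    using assms(1) insert.prems(1) by (intro additiveD) auto
  then show ?case
    using insert disjoint_family_on_mono[of I "insert j I" A] by auto
qed

lemma (in ring_of_sets) additive_sum_partition:
  fixes \<mu> :: "'a set \<Rightarrow> 'b::cancel_comm_monoid_add" and A :: "'i \<Rightarrow> 'a set"
  assumes "additive M \<mu>" "finite I" "A ` I \<subseteq> M" "disjoint_family_on A I" "\<Omega> \<subseteq> (\<Union>i\<in>I. A i)"
    and "x \<in> M"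
  shows "\<mu> x = (\<Sum>i\<in>I. \<mu> (x \<inter> A i))"
proof -
  have "(\<lambda>i. x \<inter> A i) ` I \<subseteq> M" "disjoint_family_on (\<lambda>i. x \<inter> A i) I"
    using assms(3,4,6) by (auto simp: disjoint_family_on_def)
  then have "(\<Sum>i\<in>I. \<mu> (x \<inter> A i)) = \<mu> (\<Union>i\<in>I. x \<inter> A i)"
    by (rule additive_sum_disjoint[OF assms(1,2)])
  also have "(\<Union>i\<in>I. x \<inter> A i) = x"
    using assms(5) sets_into_space[OF assms(6)] by blast
  finally show ?thesis ..
qed

definition atoms :: "'a set \<Rightarrow> 'a set set \<Rightarrow> 'a set set" where
  "atoms \<Omega> F = (\<lambda>x. {y \<in> \<Omega>. \<forall>X\<in>F. y \<in> X \<longleftrightarrow> x \<in> X}) ` \<Omega>"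

lemma finite_atoms: "finite F \<Longrightarrow> finite (atoms \<Omega> F)"
proof -
  assume "finite F"
  have "atoms \<Omega> F \<subseteq> (\<lambda>G. {y \<in> \<Omega>. \<forall>X\<in>F. y \<in> X \<longleftrightarrow> X \<in> G}) ` Pow F"
    unfolding atoms_def by (auto intro!: image_eqI[of _ _ "{X \<in> F. _ \<in> X}"])
  then show ?thesis
    by (rule finite_subset) (use \<open>finite F\<close> in simp)
qed

lemma atoms_subset: "a \<in> atoms \<Omega> F \<Longrightarrow> a \<subseteq> \<Omega>"
  unfolding atoms_def by auto

lemma Union_atoms: "\<Union>(atoms \<Omega> F) = \<Omega>"
  unfolding atoms_def by auto

lemma atoms_disjoint: "a \<in> atoms \<Omega> F \<Longrightarrow> b \<in> atoms \<Omega> F \<Longrightarrow> a \<noteq> b \<Longrightarrow> a \<inter> b = {}"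
  unfolding atoms_def by auto

lemma disjoint_family_on_atoms: "disjoint_family_on (\<lambda>a. a) (atoms \<Omega> F)"
  unfolding disjoint_family_on_def using atoms_disjoint by blast

lemma atom_subset_or_disjoint: "a \<in> atoms \<Omega> F \<Longrightarrow> X \<in> F \<Longrightarrow> a \<subseteq> X \<or> a \<inter> X = {}"
  unfolding atoms_def by auto

lemma (in algebra) atoms_in_sets:
  assumes "finite F" "F \<subseteq> M"
  shows "atoms \<Omega> F \<subseteq> M"
proof
  fix a assume "a \<in> atoms \<Omega> F"
  then obtain x where "x \<in> \<Omega>" "a = {y \<in> \<Omega>. \<forall>X\<in>F. y \<in> X \<longleftrightarrow> x \<in> X}"
    unfolding atoms_def by auto
  then have "a = \<Omega> \<inter> (\<Inter>X\<in>F. if x \<in> X then X else \<Omega> - X)"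
    by auto
  moreover have "(\<Inter>X\<in>F. if x \<in> X then X else \<Omega> - X) \<in> M" if "F \<noteq> {}"
    using assms that by (intro finite_INT) auto
  ultimately show "a \<in> M"
    by (cases "F = {}") auto
qed

lemma (in algebra) additive_sum_atoms:
  fixes \<mu> :: "'a set \<Rightarrow> 'b::cancel_comm_monoid_add"
  assumes "additive M \<mu>" "finite F" "F \<subseteq> M" "X \<in> F"
  shows "\<mu> X = (\<Sum>a\<in>atoms \<Omega> F. if a \<subseteq> X then \<mu> a else 0)"
proof -
  have "\<mu> X = (\<Sum>a\<in>atoms \<Omega> F. \<mu> (X \<inter> a))"
    using assms atoms_in_sets[OF assms(2,3)]
    by (intro additive_sum_partition finite_atoms disjoint_family_on_atoms) (auto simp: Union_atoms)
  also have "\<dots> = (\<Sum>a\<in>atoms \<Omega> F. if a \<subseteq> X then \<mu> a else 0)"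
  proof (rule sum.cong)
    fix a assume "a \<in> atoms \<Omega> F"
    then have "X \<inter> a = (if a \<subseteq> X then a else {})"
      using atom_subset_or_disjoint[of a \<Omega> F X] assms(4) by auto
    then show "\<mu> (X \<inter> a) = (if a \<subseteq> X then \<mu> a else 0)"
      using additive_empty[OF assms(1)] by simp
  qed simp
  finally show ?thesis .
qed

lemma glue_nonneg_arrays:
  fixes a :: "'p \<Rightarrow> 'q \<Rightarrow> real" and b :: "'q \<Rightarrow> 'r \<Rightarrow> real"
  assumes "finite P" "finite R"
    and a_nonneg: "\<And>p q. p \<in> P \<Longrightarrow> q \<in> Q \<Longrightarrow> 0 \<le> a p q"
    and b_nonneg: "\<And>q r. q \<in> Q \<Longrightarrow> r \<in> R \<Longrightarrow> 0 \<le> b q r"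
    and marginal: "\<And>q. q \<in> Q \<Longrightarrow> (\<Sum>p\<in>P. a p q) = (\<Sum>r\<in>R. b q r)"
  shows "\<exists>w. (\<forall>p\<in>P. \<forall>q\<in>Q. \<forall>r\<in>R. 0 \<le> w p q r \<and> (w p q r \<noteq> 0 \<longrightarrow> a p q \<noteq> 0 \<and> b q r \<noteq> 0)) \<and>
             (\<forall>p\<in>P. \<forall>q\<in>Q. (\<Sum>r\<in>R. w p q r) = a p q) \<and>
             (\<forall>q\<in>Q. \<forall>r\<in>R. (\<Sum>p\<in>P. w p q r) = b q r)"
proof -
  define B where "B q = (\<Sum>r\<in>R. b q r)" for q
  define w where "w p q r = a p q * b q r / B q" for p q r
  have degenerate: "(\<forall>p\<in>P. a p q = 0) \<and> (\<forall>r\<in>R. b q r = 0)" if "q \<in> Q" "B q = 0" for q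
    using that assms(1,2) a_nonneg[OF _ that(1)] b_nonneg[OF that(1)] marginal[OF that(1)]
    unfolding B_def by (simp add: sum_nonneg_eq_0_iff)
  have row: "(\<Sum>r\<in>R. w p q r) = a p q" if q: "q \<in> Q" and "p \<in> P" for p q
  proof (cases "B q = 0")
    case False
    have "(\<Sum>r\<in>R. w p q r) = a p q * (\<Sum>r\<in>R. b q r) / B q"
      unfolding w_def by (simp add: sum_divide_distrib sum_distrib_left)
    then show ?thesis
      using False unfolding B_def by simp
  qed (use degenerate[OF q] that(2) in \<open>simp add: w_def\<close>)
  have column: "(\<Sum>p\<in>P. w p q r) = b q r" if q: "q \<in> Q" and "r \<in> R" for q r
  proof (cases "B q = 0")
    case False
    have "(\<Sum>p\<in>P. w p q r) = (\<Sum>p\<in>P. a p q) * b q r / B q"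
      unfolding w_def by (simp add: sum_divide_distrib sum_distrib_right)
    then show ?thesis
      using False marginal[OF q] unfolding B_def by simp
  qed (use degenerate[OF q] that(2) in \<open>simp add: w_def\<close>)
  have "0 \<le> w p q r \<and> (w p q r \<noteq> 0 \<longrightarrow> a p q \<noteq> 0 \<and> b q r \<noteq> 0)"
    if "p \<in> P" "q \<in> Q" "r \<in> R" for p q r
    using a_nonneg[OF that(1,2)] b_nonneg[OF that(2,3)] b_nonneg[OF that(2)] unfolding w_def B_def
    by (auto intro!: divide_nonneg_nonneg sum_nonneg)
  then show ?thesis
    using row column by (intro exI[of _ w]) simp
qed

section \<open>Finitely additive probabilities on all subsets\<close>

definition fa_prob_on :: "'a set \<Rightarrow> ('a set \<Rightarrow> real) \<Rightarrow> bool" where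
  "fa_prob_on T \<rho> \<longleftrightarrow> (\<forall>Z. 0 \<le> \<rho> Z) \<and> additive UNIV \<rho> \<and> \<rho> T = 1 \<and> (\<forall>Z. \<rho> (Z \<inter> T) = \<rho> Z)"

lemma fa_prob_on_empty: "fa_prob_on T \<rho> \<Longrightarrow> \<rho> {} = 0"
  unfolding fa_prob_on_def using additiveD[of UNIV \<rho> "{}" "{}"] by simp

lemma fa_prob_on_le_1: "fa_prob_on T \<rho> \<Longrightarrow> \<rho> Z \<le> 1"
proof -
  assume "fa_prob_on T \<rho>"
  then have "additive UNIV \<rho>" "0 \<le> \<rho> (T - Z)" "\<rho> T = 1" "\<rho> (Z \<inter> T) = \<rho> Z"
    unfolding fa_prob_on_def by auto
  moreover have "Z \<inter> T \<union> (T - Z) = T" by blast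
  ultimately have "1 = \<rho> Z + \<rho> (T - Z)"
    using additiveD[of UNIV \<rho> "Z \<inter> T" "T - Z"] by auto
  then show ?thesis
    using \<open>0 \<le> \<rho> (T - Z)\<close> by linarith
qed

lemma fa_prob_on_pos_imp_meets:
  assumes "fa_prob_on T \<rho>" "0 < \<rho> Z"
  shows "Z \<inter> T \<noteq> {}"
proof
  assume "Z \<inter> T = {}"
  then have "\<rho> Z = \<rho> {}"
    using assms(1) unfolding fa_prob_on_def by metis
  then show False
    using assms(2) fa_prob_on_empty[OF assms(1)] by simp
qed

lemma closed_fa_prob_on: "closed {\<rho> :: 'a set \<Rightarrow> real. fa_prob_on T \<rho>}"
proof -
  have eval: "continuous_on UNIV (\<lambda>\<rho> :: 'a set \<Rightarrow> real. \<rho> Z)" for Z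
    by (rule continuous_on_product_coordinates)
  have "fa_prob_on T \<rho> \<longleftrightarrow> (\<forall>Z. 0 \<le> \<rho> Z) \<and> (\<forall>Z Z'. Z \<inter> Z' = {} \<longrightarrow> \<rho> (Z \<union> Z') = \<rho> Z + \<rho> Z') \<and>
      \<rho> T = 1 \<and> (\<forall>Z. \<rho> (Z \<inter> T) = \<rho> Z)" for \<rho>
    unfolding fa_prob_on_def additive_def by blast
  then show ?thesis
    by (simp only:)
      (intro closed_Collect_conj closed_Collect_all closed_Collect_imp open_Collect_const
        closed_Collect_le closed_Collect_eq continuous_on_const continuous_on_add eval)
qed

lemma compact_fa_prob_on: "compact {\<rho> :: 'a set \<Rightarrow> real. fa_prob_on T \<rho>}"
proof -
  have "compactin (product_topology (\<lambda>_. euclidean) UNIV) (PiE UNIV (\<lambda>_ :: 'a set. {0..1 :: real}))"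
    by (simp add: compactin_PiE)
  then have "compact (PiE UNIV (\<lambda>_ :: 'a set. {0..1 :: real}))"
    by (simp add: euclidean_product_topology)
  then have "compact (PiE UNIV (\<lambda>_. {0..1}) \<inter> {\<rho> :: 'a set \<Rightarrow> real. fa_prob_on T \<rho>})"
    using closed_fa_prob_on by (rule compact_Int_closed)
  moreover have "\<rho> Z \<in> {0..1}" if "fa_prob_on T \<rho>" for \<rho> Z
    using that fa_prob_on_le_1[OF that] unfolding fa_prob_on_def by auto
  then have "PiE UNIV (\<lambda>_. {0..1}) \<inter> {\<rho> :: 'a set \<Rightarrow> real. fa_prob_on T \<rho>} = {\<rho>. fa_prob_on T \<rho>}"
    by (auto simp: PiE_UNIV_domain)
  ultimately show ?thesis
    by simp
qed

lemma fa_prob_on_compactness: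
  assumes "\<And>C'. finite C' \<Longrightarrow> C' \<subseteq> C \<Longrightarrow> \<exists>\<rho>. fa_prob_on T \<rho> \<and> (\<forall>(Z, v)\<in>C'. \<rho> Z = v)"
  shows "\<exists>\<rho>. fa_prob_on T \<rho> \<and> (\<forall>(Z, v)\<in>C. \<rho> Z = v)"
proof -
  have "{\<rho>. fa_prob_on T \<rho>} \<inter> (\<Inter>c\<in>C. {\<rho>. \<rho> (fst c) = snd c}) \<noteq> {}"
  proof (rule compact_imp_fip_image[OF compact_fa_prob_on])
    show "closed {\<rho> :: 'a set \<Rightarrow> real. \<rho> (fst c) = snd c}" for c
      by (intro closed_Collect_eq continuous_on_product_coordinates continuous_on_const)
    fix C' assume "finite C'" "C' \<subseteq> C"
    then obtain \<rho> where "fa_prob_on T \<rho>" "\<forall>(Z, v)\<in>C'. \<rho> Z = v"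
      using assms by blast
    then have "\<rho> \<in> {\<rho>. fa_prob_on T \<rho>} \<inter> (\<Inter>c\<in>C'. {\<rho>. \<rho> (fst c) = snd c})"
      by auto
    then show "{\<rho>. fa_prob_on T \<rho>} \<inter> (\<Inter>c\<in>C'. {\<rho>. \<rho> (fst c) = snd c}) \<noteq> {}"
      by blast
  qed
  then obtain \<rho> where "\<rho> \<in> {\<rho>. fa_prob_on T \<rho>} \<inter> (\<Inter>c\<in>C. {\<rho>. \<rho> (fst c) = snd c})"
    by blast
  then have "fa_prob_on T \<rho>" "\<forall>(Z, v)\<in>C. \<rho> Z = v"
    by (simp_all add: split_beta)
  then show ?thesis
    by blast
qed

definition dirac_comb :: "'i set \<Rightarrow> ('i \<Rightarrow> real) \<Rightarrow> ('i \<Rightarrow> 'a) \<Rightarrow> 'a set \<Rightarrow> real" where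
  "dirac_comb I w c Z = (\<Sum>i\<in>I. if c i \<in> Z then w i else 0)"

lemma dirac_comb_cong:
  "(\<And>i. i \<in> I \<Longrightarrow> w i \<noteq> 0 \<Longrightarrow> c i \<in> Z \<longleftrightarrow> P i) \<Longrightarrow>
    dirac_comb I w c Z = (\<Sum>i\<in>I. if P i then w i else 0)"
  unfolding dirac_comb_def by (intro sum.cong) auto

lemma fa_prob_on_dirac_comb:
  assumes "finite I" "\<And>i. i \<in> I \<Longrightarrow> 0 \<le> w i" "\<And>i. i \<in> I \<Longrightarrow> w i \<noteq> 0 \<Longrightarrow> c i \<in> T"
    and "sum w I = 1"
  shows "fa_prob_on T (dirac_comb I w c)"
  unfolding fa_prob_on_def
proof (intro conjI allI)
  show "0 \<le> dirac_comb I w c Z" for Z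
    unfolding dirac_comb_def using assms(2) by (intro sum_nonneg) auto
  show "additive UNIV (dirac_comb I w c)"
    unfolding additive_def dirac_comb_def by (auto simp: sum.distrib[symmetric] intro!: sum.cong)
  show "dirac_comb I w c T = 1"
    using dirac_comb_cong[of I w c T "\<lambda>_. True"] assms(3,4) by simp
  show "dirac_comb I w c (Z \<inter> T) = dirac_comb I w c Z" for Z
    using dirac_comb_cong[of I w c "Z \<inter> T" "\<lambda>i. c i \<in> Z"] assms(3)
    unfolding dirac_comb_def by simp
qed

section \<open>A global extension finitely satisfiable in M\<close>

lemma keisler_if_fa_prob_on:
  assumes "fa_prob_on T \<rho>" "T \<subseteq> tup S k"
  shows "keisler S k C \<rho>"
proof -
  have "\<rho> (tup S k) = \<rho> T"
    using assms unfolding fa_prob_on_def by (metis Int_absorb1 inf_commute)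
  then show ?thesis
    using assms(1) unfolding fa_prob_on_def keisler_def additive_def by auto
qed

lemma fin_sat_in_if_fa_prob_on:
  "fa_prob_on {c \<in> tup S k. set c \<subseteq> M} \<rho> \<Longrightarrow> fin_sat_in S k M \<rho>"
  unfolding fin_sat_in_def using fa_prob_on_pos_imp_meets by blast

locale amalgamation =
  fixes S :: "('a, 'f, 'r) struc" and M A :: "'a set" and n m :: nat
    and lam \<mu> :: "'a list set \<Rightarrow> real"
  assumes elem_sub: "elem_sub M S" and A_subset: "A \<subseteq> M"
    and keisler_lam: "keisler S (n + m) A lam"
    and marginal: "\<forall>D\<in>defsets S n A. pix S n m lam D = \<mu> D"
    and keisler_\<mu>: "keisler S n (univ S) \<mu>"
    and fin_sat_\<mu>: "fin_sat_in S n M \<mu>"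
begin

lemma lam_nonneg: "D \<in> defsets S (n + m) A \<Longrightarrow> 0 \<le> lam D"
  and lam_additive: "additive (defsets S (n + m) A) lam"
  and lam_top: "lam (tup S (n + m)) = 1"
  using keisler_lam unfolding keisler_def additive_def by auto

lemma \<mu>_nonneg: "D \<in> defsets S n (univ S) \<Longrightarrow> 0 \<le> \<mu> D"
  and \<mu>_additive: "additive (defsets S n (univ S)) \<mu>"
  using keisler_\<mu> unfolding keisler_def additive_def by auto

lemma lam_xcyl: "D \<in> defsets S n A \<Longrightarrow> lam (xcyl S m D) = \<mu> D"
  using marginal by (simp add: pix_eq_xcyl)

lemma defsets_A_subset: "defsets S k A \<subseteq> defsets S k (univ S)"
  using elem_sub A_subset unfolding elem_sub_def by (intro defsets_mono) auto

text \<open>The only place where finite satisfiability of \<open>\<mu>\<close> enters.\<close>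
lemma M_point_in_xcyl:
  assumes p: "p \<in> defsets S (n + m) A" and D: "D \<in> defsets S n (univ S)" "D \<subseteq> xproj S n m p"
    and "0 < \<mu> D"
  shows "\<exists>c\<in>p \<inter> xcyl S m D. set c \<subseteq> M"
proof -
  obtain a where a: "a \<in> D" "set a \<subseteq> M"
    using fin_sat_\<mu> D(1) \<open>0 < \<mu> D\<close> unfolding fin_sat_in_def by blast
  have "p \<in> defsets S (n + m) M"
    using p defsets_mono[OF A_subset] by blast
  then obtain b where b: "b \<in> tup S m" "set b \<subseteq> M" "a @ b \<in> p"
    using elem_sub_extend_tuple[OF elem_sub _ _ a(2)] a(1) D(2) by blast
  then have "a @ b \<in> xcyl S m D"
    using a(1) unfolding xcyl_def by blast
  then show ?thesis
    using a(2) b by (intro bexI[of _ "a @ b"]) auto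
qed

lemma finite_coupling:
  assumes FA: "finite FA" "FA \<subseteq> defsets S (n + m) A"
    and FB: "finite FB" "FB \<subseteq> defsets S n (univ S)"
  defines "P \<equiv> atoms (tup S (n + m)) FA"
    and "Q \<equiv> atoms (tup S n) (xproj S n m ` atoms (tup S (n + m)) FA)"
    and "R \<equiv> atoms (tup S n) FB"
  shows "\<exists>w c. (\<forall>p\<in>P. \<forall>q\<in>Q. \<forall>r\<in>R. 0 \<le> w p q r \<and>
                  (w p q r \<noteq> 0 \<longrightarrow> c p q r \<in> p \<inter> xcyl S m r \<and> set (c p q r) \<subseteq> M)) \<and>
               (\<forall>p\<in>P. (\<Sum>q\<in>Q. \<Sum>r\<in>R. w p q r) = lam p) \<and>
               (\<forall>r\<in>R. (\<Sum>p\<in>P. \<Sum>q\<in>Q. w p q r) = \<mu> r)"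
proof -
  interpret xy: algebra "tup S (n + m)" "defsets S (n + m) A"
    by (rule algebra_defsets)
  interpret xA: algebra "tup S n" "defsets S n A"
    by (rule algebra_defsets)
  interpret x: algebra "tup S n" "defsets S n (univ S)"
    by (rule algebra_defsets)
  have P: "finite P" "P \<subseteq> defsets S (n + m) A"
    using xy.atoms_in_sets FA finite_atoms unfolding P_def by auto
  have Q_eq: "Q = atoms (tup S n) (xproj S n m ` P)"
    unfolding Q_def P_def ..
  have "xproj S n m ` P \<subseteq> defsets S n A"
    using P(2) defsets_xproj by blast
  then have Q: "finite Q" "Q \<subseteq> defsets S n A"
    using xA.atoms_in_sets P(1) unfolding Q_eq by (auto intro: finite_atoms)
  then have Q': "Q \<subseteq> defsets S n (univ S)"
    using defsets_A_subset by blast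
  have R: "finite R" "R \<subseteq> defsets S n (univ S)"
    using x.atoms_in_sets FB finite_atoms unfolding R_def by auto
  have sum_P: "lam Z = (\<Sum>p\<in>P. lam (Z \<inter> p))" if "Z \<in> defsets S (n + m) A" for Z
  proof (rule xy.additive_sum_partition[OF lam_additive P(1)])
    show "disjoint_family_on (\<lambda>p. p) P" "tup S (n + m) \<subseteq> (\<Union>p\<in>P. p)"
      unfolding P_def by (simp_all add: disjoint_family_on_atoms Union_atoms)
  qed (use P(2) that in auto)
  have sum_Q: "\<mu> Z = (\<Sum>q\<in>Q. \<mu> (Z \<inter> q))" if "Z \<in> defsets S n (univ S)" for Z
  proof (rule x.additive_sum_partition[OF \<mu>_additive Q(1)])
    show "disjoint_family_on (\<lambda>q. q) Q" "tup S n \<subseteq> (\<Union>q\<in>Q. q)"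
      unfolding Q_eq by (simp_all add: disjoint_family_on_atoms Union_atoms)
  qed (use Q' that in auto)
  have sum_R: "\<mu> Z = (\<Sum>r\<in>R. \<mu> (Z \<inter> r))" if "Z \<in> defsets S n (univ S)" for Z
  proof (rule x.additive_sum_partition[OF \<mu>_additive R(1)])
    show "disjoint_family_on (\<lambda>r. r) R" "tup S n \<subseteq> (\<Union>r\<in>R. r)"
      unfolding R_def by (simp_all add: disjoint_family_on_atoms Union_atoms)
  qed (use R(2) that in auto)
  have sum_xcyl_Q: "lam Z = (\<Sum>q\<in>Q. lam (Z \<inter> xcyl S m q))" if "Z \<in> defsets S (n + m) A" for Z
  proof (rule xy.additive_sum_partition[OF lam_additive Q(1)])
    show "xcyl S m ` Q \<subseteq> defsets S (n + m) A"
      using Q(2) by (auto intro: defsets_xcyl)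
    show "disjoint_family_on (xcyl S m) Q"
      using disjoint_family_on_atoms atoms_subset[of _ "tup S n"] unfolding Q_eq
      by (intro disjoint_family_on_xcyl[where n = n]) blast+
    show "tup S (n + m) \<subseteq> (\<Union>q\<in>Q. xcyl S m q)"
      by (rule tup_subset_UN_xcyl) (simp add: Q_eq Union_atoms)
  qed (rule that)
  define a where "a p q = lam (p \<inter> xcyl S m q)" for p q
  define b where "b q r = \<mu> (q \<inter> r)" for q r
  have a_sets: "p \<inter> xcyl S m q \<in> defsets S (n + m) A" if "p \<in> P" "q \<in> Q" for p q
    using that P(2) Q(2) by (intro xy.Int defsets_xcyl) auto
  have b_sets: "q \<inter> r \<in> defsets S n (univ S)" if "q \<in> Q" "r \<in> R" for q r
    using that Q' R(2) by (intro x.Int) auto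
  have "(\<Sum>p\<in>P. a p q) = (\<Sum>r\<in>R. b q r)" if "q \<in> Q" for q
  proof -
    have "xcyl S m q \<in> defsets S (n + m) A"
      using Q(2) that by (auto intro: defsets_xcyl)
    then have "(\<Sum>p\<in>P. a p q) = lam (xcyl S m q)"
      using sum_P by (simp add: a_def Int_commute)
    also have "\<dots> = \<mu> q"
      using lam_xcyl Q(2) that by blast
    also have "\<dots> = (\<Sum>r\<in>R. b q r)"
      using sum_R[of q] Q' that by (auto simp: b_def)
    finally show ?thesis .
  qed
  then obtain w where w:
    "\<forall>p\<in>P. \<forall>q\<in>Q. \<forall>r\<in>R. 0 \<le> w p q r \<and> (w p q r \<noteq> 0 \<longrightarrow> a p q \<noteq> 0 \<and> b q r \<noteq> 0)"
    "\<forall>p\<in>P. \<forall>q\<in>Q. (\<Sum>r\<in>R. w p q r) = a p q"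
    "\<forall>q\<in>Q. \<forall>r\<in>R. (\<Sum>p\<in>P. w p q r) = b q r"
    using glue_nonneg_arrays[OF P(1) R(1), of Q a b] a_sets b_sets lam_nonneg \<mu>_nonneg
    unfolding a_def b_def by blast
  have point: "\<exists>c\<in>p \<inter> xcyl S m r. set c \<subseteq> M"
    if "p \<in> P" "q \<in> Q" "r \<in> R" "w p q r \<noteq> 0" for p q r
  proof -
    have "lam (p \<inter> xcyl S m q) \<noteq> 0" "\<mu> (q \<inter> r) \<noteq> 0"
      using w(1) that unfolding a_def b_def by blast+
    then have "p \<inter> xcyl S m q \<noteq> {}"
      using xy.additive_empty[OF lam_additive] by auto
    then have "xproj S n m p \<inter> q \<noteq> {}"
      using that(1) P(2) xy.sets_into_space by (intro xproj_meets_if_xcyl_meets) auto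
    then have "q \<inter> r \<subseteq> xproj S n m p"
      using atom_subset_or_disjoint[of q "tup S n" "xproj S n m ` P" "xproj S n m p"] that(1,2)
      unfolding Q_eq by blast
    moreover have "0 < \<mu> (q \<inter> r)"
      using \<open>\<mu> (q \<inter> r) \<noteq> 0\<close> \<mu>_nonneg[OF b_sets[OF that(2,3)]] by simp
    ultimately have "\<exists>c\<in>p \<inter> xcyl S m (q \<inter> r). set c \<subseteq> M"
      using that(1) P(2) b_sets[OF that(2,3)] by (intro M_point_in_xcyl) auto
    then show ?thesis
      using xcyl_mono[of "q \<inter> r" r S m] by blast
  qed
  define c where "c p (q :: 'a list set) r = (SOME c. c \<in> p \<inter> xcyl S m r \<and> set c \<subseteq> M)" for p q r
  have "c p q r \<in> p \<inter> xcyl S m r \<and> set (c p q r) \<subseteq> M"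
    if "p \<in> P" "q \<in> Q" "r \<in> R" "w p q r \<noteq> 0" for p q r
    unfolding c_def using someI_ex[OF point[OF that, unfolded Bex_def]] .
  moreover have "(\<Sum>q\<in>Q. \<Sum>r\<in>R. w p q r) = lam p" if "p \<in> P" for p
  proof -
    have "(\<Sum>q\<in>Q. \<Sum>r\<in>R. w p q r) = (\<Sum>q\<in>Q. lam (p \<inter> xcyl S m q))"
      using w(2) that unfolding a_def by simp
    also have "\<dots> = lam p"
      using sum_xcyl_Q[of p] that P(2) by auto
    finally show ?thesis .
  qed
  moreover have "(\<Sum>p\<in>P. \<Sum>q\<in>Q. w p q r) = \<mu> r" if "r \<in> R" for r
  proof -
    have "(\<Sum>p\<in>P. \<Sum>q\<in>Q. w p q r) = (\<Sum>q\<in>Q. \<Sum>p\<in>P. w p q r)"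
      by (rule sum.swap)
    also have "\<dots> = (\<Sum>q\<in>Q. \<mu> (q \<inter> r))"
      using w(3) that by (simp add: b_def)
    also have "\<dots> = \<mu> r"
      using sum_Q[of r] R(2) that by (auto simp: Int_commute)
    finally show ?thesis .
  qed
  ultimately show ?thesis
    using w(1) by (intro exI[of _ w] exI[of _ c]) blast
qed

lemma finite_amalgam:
  assumes FA: "finite FA" "FA \<subseteq> defsets S (n + m) A"
    and FB: "finite FB" "FB \<subseteq> defsets S n (univ S)"
  shows "\<exists>\<rho>. fa_prob_on {c \<in> tup S (n + m). set c \<subseteq> M} \<rho> \<and>
     (\<forall>\<alpha>\<in>FA. \<rho> \<alpha> = lam \<alpha>) \<and> (\<forall>D\<in>FB. \<rho> (xcyl S m D) = \<mu> D)"
proof -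
  interpret xy: algebra "tup S (n + m)" "defsets S (n + m) A"
    by (rule algebra_defsets)
  interpret x: algebra "tup S n" "defsets S n (univ S)"
    by (rule algebra_defsets)
  define FA' where "FA' = insert (tup S (n + m)) FA"
  have FA': "finite FA'" "FA' \<subseteq> defsets S (n + m) A"
    using FA unfolding FA'_def by auto
  define P where "P = atoms (tup S (n + m)) FA'"
  define Q where "Q = atoms (tup S n) (xproj S n m ` P)"
  define R where "R = atoms (tup S n) FB"
  obtain w c where wc:
    "\<forall>p\<in>P. \<forall>q\<in>Q. \<forall>r\<in>R. 0 \<le> w p q r \<and>
       (w p q r \<noteq> 0 \<longrightarrow> c p q r \<in> p \<inter> xcyl S m r \<and> set (c p q r) \<subseteq> M)"
    "\<forall>p\<in>P. (\<Sum>q\<in>Q. \<Sum>r\<in>R. w p q r) = lam p"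
    "\<forall>r\<in>R. (\<Sum>p\<in>P. \<Sum>q\<in>Q. w p q r) = \<mu> r"
    using finite_coupling[OF FA' FB] unfolding P_def Q_def R_def by blast
  define \<rho> where "\<rho> = dirac_comb (P \<times> Q \<times> R) (\<lambda>(p, q, r). w p q r) (\<lambda>(p, q, r). c p q r)"
  have \<rho>_eq: "\<rho> Z = (\<Sum>p\<in>P. \<Sum>q\<in>Q. \<Sum>r\<in>R. if f p q r then w p q r else 0)"
    if "\<And>p q r. p \<in> P \<Longrightarrow> q \<in> Q \<Longrightarrow> r \<in> R \<Longrightarrow> w p q r \<noteq> 0 \<Longrightarrow> c p q r \<in> Z \<longleftrightarrow> f p q r"
    for Z f
    unfolding \<rho>_def dirac_comb_def sum.cartesian_product' using that
    by (intro sum.cong refl) auto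
  have \<rho>_lam: "\<rho> \<alpha> = lam \<alpha>" if "\<alpha> \<in> FA'" for \<alpha>
  proof -
    have "\<rho> \<alpha> = (\<Sum>p\<in>P. \<Sum>q\<in>Q. \<Sum>r\<in>R. if p \<subseteq> \<alpha> then w p q r else 0)"
    proof (rule \<rho>_eq)
      fix p q r assume "p \<in> P" "q \<in> Q" "r \<in> R" "w p q r \<noteq> 0"
      then show "c p q r \<in> \<alpha> \<longleftrightarrow> p \<subseteq> \<alpha>"
        using wc(1) atom_subset_or_disjoint[of p _ FA' \<alpha>] that unfolding P_def by blast
    qed
    also have "\<dots> = (\<Sum>p\<in>P. if p \<subseteq> \<alpha> then lam p else 0)"
      using wc(2) by (intro sum.cong refl) auto
    also have "\<dots> = lam \<alpha>"
      using xy.additive_sum_atoms[OF lam_additive FA' that] unfolding P_def by simp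
    finally show ?thesis .
  qed
  have \<rho>_\<mu>: "\<rho> (xcyl S m D) = \<mu> D" if "D \<in> FB" for D
  proof -
    have "\<rho> (xcyl S m D) = (\<Sum>p\<in>P. \<Sum>q\<in>Q. \<Sum>r\<in>R. if r \<subseteq> D then w p q r else 0)"
    proof (rule \<rho>_eq)
      fix p q r assume "p \<in> P" "q \<in> Q" "r \<in> R" "w p q r \<noteq> 0"
      then show "c p q r \<in> xcyl S m D \<longleftrightarrow> r \<subseteq> D"
        using wc(1) atoms_subset[of r] atom_subset_or_disjoint[of r _ FB D] that FB(2)
          x.sets_into_space
        unfolding R_def by (intro xcyl_mem_iff_subset[where n = n]) blast+
    qed
    also have "\<dots> = (\<Sum>r\<in>R. \<Sum>p\<in>P. \<Sum>q\<in>Q. if r \<subseteq> D then w p q r else 0)"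
      by (simp add: sum.swap[of _ Q R] sum.swap[of _ P R])
    also have "\<dots> = (\<Sum>r\<in>R. if r \<subseteq> D then \<mu> r else 0)"
      using wc(3) by (intro sum.cong refl) auto
    also have "\<dots> = \<mu> D"
      using x.additive_sum_atoms[OF \<mu>_additive FB that] unfolding R_def by simp
    finally show ?thesis .
  qed
  have c_tup: "c p q r \<in> tup S (n + m)" if "p \<in> P" "q \<in> Q" "r \<in> R" "w p q r \<noteq> 0" for p q r
    using wc(1) that atoms_subset[of p "tup S (n + m)" FA'] unfolding P_def by blast
  have "fa_prob_on {c \<in> tup S (n + m). set c \<subseteq> M} \<rho>"
    unfolding \<rho>_def
  proof (rule fa_prob_on_dirac_comb)
    have "finite P" "finite Q" "finite R"
      using FA'(1) FB(1) unfolding P_def Q_def R_def by (auto intro: finite_atoms)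
    then show "finite (P \<times> Q \<times> R)"
      by simp
    have "sum (\<lambda>(p, q, r). w p q r) (P \<times> Q \<times> R) = \<rho> (tup S (n + m))"
      using c_tup by (subst \<rho>_eq[where f = "\<lambda>_ _ _. True"]) (auto simp: sum.cartesian_product')
    then show "sum (\<lambda>(p, q, r). w p q r) (P \<times> Q \<times> R) = 1"
      using \<rho>_lam[of "tup S (n + m)"] lam_top unfolding FA'_def by simp
  qed (use wc(1) c_tup in auto)
  then show ?thesis
    using \<rho>_lam \<rho>_\<mu> unfolding FA'_def by blast
qed

lemma fin_sat_amalgam:
  "\<exists>\<omega>. keisler S (n + m) (univ S) \<omega> \<and> (\<forall>D\<in>defsets S (n + m) A. \<omega> D = lam D) \<and>
       (\<forall>D\<in>defsets S n (univ S). pix S n m \<omega> D = \<mu> D) \<and> fin_sat_in S (n + m) M \<omega>"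
proof -
  define g where "g \<alpha> = (\<alpha>, lam \<alpha>)" for \<alpha>
  define h where "h D = (xcyl S m D, \<mu> D)" for D
  define C where "C = g ` defsets S (n + m) A \<union> h ` defsets S n (univ S)"
  have "\<exists>\<omega>. fa_prob_on {c \<in> tup S (n + m). set c \<subseteq> M} \<omega> \<and> (\<forall>(Z, v)\<in>C. \<omega> Z = v)"
  proof (rule fa_prob_on_compactness)
    fix C' assume C': "finite C'" "C' \<subseteq> C"
    have "finite (C' \<inter> g ` defsets S (n + m) A)" "finite (C' \<inter> h ` defsets S n (univ S))"
      using C'(1) by simp_all
    then obtain FA FB where FA: "FA \<subseteq> defsets S (n + m) A" "finite FA" "C' \<inter> g ` defsets S (n + m) A = g ` FA"
      and FB: "FB \<subseteq> defsets S n (univ S)" "finite FB" "C' \<inter> h ` defsets S n (univ S) = h ` FB"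
      by (meson finite_subset_image inf_le2)
    obtain \<rho> where \<rho>: "fa_prob_on {c \<in> tup S (n + m). set c \<subseteq> M} \<rho>"
      "\<forall>\<alpha>\<in>FA. \<rho> \<alpha> = lam \<alpha>" "\<forall>D\<in>FB. \<rho> (xcyl S m D) = \<mu> D"
      using finite_amalgam[OF FA(2,1) FB(2,1)] by blast
    have "C' = (C' \<inter> g ` defsets S (n + m) A) \<union> (C' \<inter> h ` defsets S n (univ S))"
      using C'(2) unfolding C_def by blast
    then have "C' = g ` FA \<union> h ` FB"
      using FA(3) FB(3) by simp
    then have "\<forall>(Z, v)\<in>C'. \<rho> Z = v"
      using \<rho>(2,3) unfolding g_def h_def by blast
    then show "\<exists>\<rho>. fa_prob_on {c \<in> tup S (n + m). set c \<subseteq> M} \<rho> \<and> (\<forall>(Z, v)\<in>C'. \<rho> Z = v)"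
      using \<rho>(1) by blast
  qed
  then obtain \<omega> where \<omega>: "fa_prob_on {c \<in> tup S (n + m). set c \<subseteq> M} \<omega>" "\<forall>(Z, v)\<in>C. \<omega> Z = v"
    by blast
  have "keisler S (n + m) (univ S) \<omega>"
    using \<omega>(1) by (rule keisler_if_fa_prob_on) auto
  moreover have "\<omega> D = lam D" if "D \<in> defsets S (n + m) A" for D
  proof -
    have "g D \<in> C"
      using that unfolding C_def by blast
    then show ?thesis
      using \<omega>(2) unfolding g_def by auto
  qed
  moreover have "pix S n m \<omega> D = \<mu> D" if "D \<in> defsets S n (univ S)" for D
  proof -
    have "h D \<in> C"
      using that unfolding C_def by blast
    then show ?thesis
      using \<omega>(2) unfolding h_def pix_eq_xcyl by auto
  qed
  ultimately show ?thesis
    using fin_sat_in_if_fa_prob_on[OF \<omega>(1)] by blast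
qed

end

lemma fin_sat_in_if_edom_at:
  fixes S :: "('a, 'f, 'r) struc"
  assumes "elem_sub M S" "A \<subseteq> M" "edom_at S n m A \<mu> \<nu>"
    and "keisler S n (univ S) \<mu>" "fin_sat_in S n M \<mu>"
  shows "fin_sat_in S m M \<nu>"
proof -
  obtain lam where lam: "keisler S (n + m) A lam" "\<forall>D\<in>defsets S n A. pix S n m lam D = \<mu> D"
    and determines: "\<forall>\<omega>. keisler S (n + m) (univ S) \<omega> \<longrightarrow>
           (\<forall>D\<in>defsets S (n + m) A. \<omega> D = lam D) \<longrightarrow>
           (\<forall>D\<in>defsets S n (univ S). pix S n m \<omega> D = \<mu> D) \<longrightarrow>
           (\<forall>D\<in>defsets S m (univ S). piy S n m \<omega> D = \<nu> D)"
    using assms(3) unfolding edom_at_def by blast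
  interpret amalgamation S M A n m lam \<mu>
    using assms(1,2,4,5) lam by unfold_locales
  obtain \<omega> where \<omega>: "keisler S (n + m) (univ S) \<omega>" "\<forall>D\<in>defsets S (n + m) A. \<omega> D = lam D"
    "\<forall>D\<in>defsets S n (univ S). pix S n m \<omega> D = \<mu> D" "fin_sat_in S (n + m) M \<omega>"
    using fin_sat_amalgam by blast
  have \<nu>: "piy S n m \<omega> D = \<nu> D" if "D \<in> defsets S m (univ S)" for D
    using determines \<omega>(1-3) that by blast
  show ?thesis
    unfolding fin_sat_in_def
  proof (intro ballI impI)
    fix D assume D: "D \<in> defsets S m (univ S)" "0 < \<nu> D"
    then have "0 < \<omega> (ycyl S n D)"
      using \<nu> by (simp add: piy_eq_ycyl)
    then obtain c where "c \<in> ycyl S n D" "set c \<subseteq> M"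
      using \<omega>(4) defsets_ycyl[OF D(1)] unfolding fin_sat_in_def by blast
    then show "\<exists>b\<in>D. set b \<subseteq> M"
      unfolding ycyl_def by force
  qed
qed

section \<open>Downward Loewenheim-Skolem\<close>

unbundle cardinal_syntax

lemma card_of_Un_le_infinite: "\<not> finite L \<Longrightarrow> |A| \<le>o |L| \<Longrightarrow> |B| \<le>o |L| \<Longrightarrow> |A \<union> B| \<le>o |L|"
  using card_of_Un_ordLeq_infinite_Field[of "|L|"] by (simp add: Field_card_of card_of_card_order_on)

lemma card_of_Times_le_infinite: "\<not> finite L \<Longrightarrow> |A| \<le>o |L| \<Longrightarrow> |B| \<le>o |L| \<Longrightarrow> |A \<times> B| \<le>o |L|"
  using card_of_Times_ordLeq_infinite_Field[of "|L|"] by (simp add: Field_card_of card_of_card_order_on)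

lemma card_of_Plus_le_infinite: "\<not> finite L \<Longrightarrow> |A| \<le>o |L| \<Longrightarrow> |B| \<le>o |L| \<Longrightarrow> |A <+> B| \<le>o |L|"
  using card_of_Plus_ordLeq_infinite_Field[of "|L|"] by (simp add: Field_card_of card_of_card_order_on)

lemma card_of_lists_le_infinite:
  assumes L: "\<not> finite L" and A: "|A| \<le>o |L|"
  shows "|lists A| \<le>o |L|"
proof -
  define Lk where "Lk k = {xs \<in> lists A. length xs = k}" for k
  have "|Lk k| \<le>o |L|" for k
  proof (induction k)
    case 0
    have "Lk 0 = {[]}" unfolding Lk_def by auto
    then show ?case
      using L card_of_singl_ordLeq[of L "[]"] by auto
  next
    case (Suc k)
    have "Lk (Suc k) = (\<lambda>(a, xs). a # xs) ` (A \<times> Lk k)"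
      unfolding Lk_def by (auto simp: length_Suc_conv image_iff)
    then have "|Lk (Suc k)| \<le>o |A \<times> Lk k|"
      using card_of_image by metis
    then show ?case
      using card_of_Times_le_infinite[OF L A Suc] by (rule ordLeq_transitive)
  qed
  moreover have "|UNIV :: nat set| \<le>o |L|"
    using L infinite_iff_card_of_nat by blast
  ultimately have "|\<Union>k. Lk k| \<le>o |L|"
    using card_of_UNION_ordLeq_infinite[OF L, of UNIV Lk] by simp
  moreover have "(\<Union>k. Lk k) = lists A"
    unfolding Lk_def by auto
  ultimately show ?thesis by simp
qed

text \<open>Formulas are counted through an injective (prefix-free) encoding as token lists.\<close>
datatype ('f, 'r) token = TVar nat | TFn 'f nat | TFF | TEq | TRel 'r nat | TNeg | TConj | TEx nat

fun encode_trm :: "'f trm \<Rightarrow> ('f, 'r) token list" where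
  "encode_trm (Var i) = [TVar i]"
| "encode_trm (Fn f ts) = TFn f (length ts) # concat (map encode_trm ts)"

fun encode_fm :: "('f, 'r) fm \<Rightarrow> ('f, 'r) token list" where
  "encode_fm FF = [TFF]"
| "encode_fm (Eq s t) = TEq # encode_trm s @ encode_trm t"
| "encode_fm (Rel r ts) = TRel r (length ts) # concat (map encode_trm ts)"
| "encode_fm (Neg \<phi>) = TNeg # encode_fm \<phi>"
| "encode_fm (Conj \<phi> \<psi>) = TConj # encode_fm \<phi> @ encode_fm \<psi>"
| "encode_fm (Ex i \<phi>) = TEx i # encode_fm \<phi>"

lemma concat_map_prefix_free:
  assumes "\<And>s t xs ys. s \<in> set ss \<Longrightarrow> f s @ xs = f t @ ys \<Longrightarrow> s = t \<and> xs = ys"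
    and "length ss = length ts" and "concat (map f ss) @ xs = concat (map f ts) @ ys"
  shows "ss = ts \<and> xs = ys"
  using assms
proof (induction ss arbitrary: ts)
  case (Cons s ss)
  then obtain t ts' where ts: "ts = t # ts'"
    by (cases ts) auto
  then have "f s @ (concat (map f ss) @ xs) = f t @ (concat (map f ts') @ ys)"
    using Cons.prems(3) by simp
  moreover have "s \<in> set (s # ss)"
    by simp
  ultimately have "s = t" "concat (map f ss) @ xs = concat (map f ts') @ ys"
    using Cons.prems(1) by blast+
  moreover have "ss = ts' \<and> xs = ys"
  proof (rule Cons.IH)
    show "\<And>s t xs ys. s \<in> set ss \<Longrightarrow> f s @ xs = f t @ ys \<Longrightarrow> s = t \<and> xs = ys"
      using Cons.prems(1) by (metis list.set_intros(2))
    show "length ss = length ts'"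
      using Cons.prems(2) ts by simp
  qed fact
  ultimately show ?case
    using ts by simp
qed simp

lemma encode_trm_prefix_free:
  "(encode_trm s :: ('f, 'r) token list) @ xs = encode_trm t @ ys \<Longrightarrow> s = t \<and> xs = ys"
proof (induction s arbitrary: t xs ys)
  case (Var i)
  then show ?case by (cases t) auto
next
  case (Fn f ss)
  then obtain ts where t: "t = Fn f ts" and len: "length ss = length ts"
    and cat: "concat (map encode_trm ss) @ xs = (concat (map encode_trm ts) :: ('f, 'r) token list) @ ys"
    by (cases t) auto
  have IH: "\<And>s t xs ys. s \<in> set ss \<Longrightarrow>
      (encode_trm s :: ('f, 'r) token list) @ xs = encode_trm t @ ys \<Longrightarrow> s = t \<and> xs = ys"
    using Fn.IH by blast
  from IH len cat have "ss = ts \<and> xs = ys"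
    by (rule concat_map_prefix_free)
  then show ?case
    using t by simp
qed

lemma encode_fm_prefix_free:
  fixes \<phi> \<psi> :: "('f, 'r) fm"
  shows "encode_fm \<phi> @ xs = encode_fm \<psi> @ ys \<Longrightarrow> \<phi> = \<psi> \<and> xs = ys"
proof (induction \<phi> arbitrary: \<psi> xs ys)
  case FF
  then show ?case by (cases \<psi>) auto
next
  case (Eq s t)
  obtain s' t' where \<psi>: "\<psi> = Eq s' t'"
    using Eq.prems by (cases \<psi>) auto
  then have "encode_trm s @ (encode_trm t @ xs) = encode_trm s' @ (encode_trm t' @ ys)"
    using Eq.prems by simp
  then have "s = s'" "encode_trm t @ xs = encode_trm t' @ ys"
    using encode_trm_prefix_free by blast+
  then show ?case
    using encode_trm_prefix_free \<psi> by blast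
next
  case (Rel r ts)
  obtain ts' where \<psi>: "\<psi> = Rel r ts'" "length ts = length ts'"
    "(concat (map encode_trm ts) :: ('f, 'r) token list) @ xs = concat (map encode_trm ts') @ ys"
    using Rel.prems by (cases \<psi>) auto
  have "ts = ts' \<and> xs = ys"
    using encode_trm_prefix_free \<psi>(2,3) by (rule concat_map_prefix_free)
  then show ?case
    using \<psi>(1) by simp
next
  case (Neg \<phi>)
  obtain \<phi>' where "\<psi> = Neg \<phi>'"
    using Neg.prems by (cases \<psi>) auto
  then show ?case
    using Neg by auto
next
  case (Conj \<phi>1 \<phi>2)
  obtain \<psi>1 \<psi>2 where \<psi>: "\<psi> = Conj \<psi>1 \<psi>2"
    using Conj.prems by (cases \<psi>) auto
  then have "encode_fm \<phi>1 @ (encode_fm \<phi>2 @ xs) = encode_fm \<psi>1 @ (encode_fm \<psi>2 @ ys)"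
    using Conj.prems by simp
  then have "\<phi>1 = \<psi>1" "encode_fm \<phi>2 @ xs = encode_fm \<psi>2 @ ys"
    using Conj.IH(1) by blast+
  then show ?case
    using Conj.IH(2) \<psi> by blast
next
  case (Ex i \<phi>)
  obtain \<phi>' where "\<psi> = Ex i \<phi>'"
    using Ex.prems by (cases \<psi>) auto
  then show ?case
    using Ex by auto
qed

lemma inj_encode_fm: "inj encode_fm"
  by (rule injI) (metis append_Nil2 encode_fm_prefix_free)

definition token_code :: "('f, 'r) token \<Rightarrow> ('f + 'r + nat) \<times> nat" where
  "token_code t = (case t of TVar i \<Rightarrow> (Inr (Inr 0), i) | TFn f k \<Rightarrow> (Inl f, k) | TFF \<Rightarrow> (Inr (Inr 1), 0)
     | TEq \<Rightarrow> (Inr (Inr 2), 0) | TRel r k \<Rightarrow> (Inr (Inl r), k) | TNeg \<Rightarrow> (Inr (Inr 3), 0)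
     | TConj \<Rightarrow> (Inr (Inr 4), 0) | TEx i \<Rightarrow> (Inr (Inr 5), i))"

lemma inj_token_code: "inj token_code"
proof (rule injI)
  fix x y :: "('f, 'r) token"
  assume "token_code x = token_code y"
  then show "x = y"
    unfolding token_code_def by (cases x; cases y) auto
qed

lemma card_of_fm_le:
  assumes L: "\<not> finite L" and "|UNIV :: 'f set| \<le>o |L|" "|UNIV :: 'r set| \<le>o |L|"
  shows "|UNIV :: ('f, 'r) fm set| \<le>o |L|"
proof -
  have nat: "|UNIV :: nat set| \<le>o |L|"
    using L infinite_iff_card_of_nat by blast
  have "|UNIV :: ('f + 'r + nat) set| \<le>o |L|"
    using card_of_Plus_le_infinite[OF L assms(2) card_of_Plus_le_infinite[OF L assms(3) nat]]
    by (simp only: UNIV_Plus_UNIV)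
  then have "|(UNIV :: ('f + 'r + nat) set) \<times> (UNIV :: nat set)| \<le>o |L|"
    using nat by (rule card_of_Times_le_infinite[OF L])
  moreover have "|UNIV :: ('f, 'r) token set| \<le>o |(UNIV :: ('f + 'r + nat) set) \<times> (UNIV :: nat set)|"
    by (rule card_of_ordLeq[THEN iffD1], rule exI[of _ token_code]) (simp add: inj_token_code)
  ultimately have "|UNIV :: ('f, 'r) token set| \<le>o |L|"
    by (rule ordLeq_transitive[rotated])
  then have "|lists (UNIV :: ('f, 'r) token set)| \<le>o |L|"
    by (rule card_of_lists_le_infinite[OF L])
  moreover have "|UNIV :: ('f, 'r) fm set| \<le>o |lists (UNIV :: ('f, 'r) token set)|"
    by (rule card_of_ordLeq[THEN iffD1], rule exI[of _ encode_fm]) (simp add: inj_encode_fm)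
  ultimately show ?thesis
    by (rule ordLeq_transitive[rotated])
qed

lemma elem_sub_if_Tarski_Vaught:
  fixes S :: "('a, 'f, 'r) struc"
  assumes sub: "M \<subseteq> univ S" and "M \<noteq> {}"
    and closed: "\<forall>f as. set as \<subseteq> M \<longrightarrow> fnc S f as \<in> M"
    and witness: "\<forall>(\<phi> :: ('f, 'r) fm) i e. (\<forall>j. e j \<in> M) \<longrightarrow> (\<exists>a\<in>univ S. sat S \<phi> (e(i := a))) \<longrightarrow>
               (\<exists>a\<in>M. sat S \<phi> (e(i := a)))"
  shows "elem_sub M S"
proof -
  have "sat (S\<lparr>univ := M\<rparr>) \<phi> e \<longleftrightarrow> sat S \<phi> e" if "\<forall>j. e j \<in> M" for \<phi> :: "('f, 'r) fm" and e
    using that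
  proof (induction \<phi> arbitrary: e)
    case (Eq s t)
    then show ?case by (simp add: evalt_univ_update)
  next
    case (Rel r ts)
    have "map (evalt (S\<lparr>univ := M\<rparr>) e) ts = map (evalt S e) ts" "rel (S\<lparr>univ := M\<rparr>) = rel S"
      by (simp_all add: evalt_univ_update)
    then show ?case by (simp only: sat.simps)
  next
    case (Ex i \<phi>)
    have "sat (S\<lparr>univ := M\<rparr>) (Ex i \<phi>) e \<longleftrightarrow> (\<exists>a\<in>M. sat (S\<lparr>univ := M\<rparr>) \<phi> (e(i := a)))"
      by simp
    also have "\<dots> \<longleftrightarrow> (\<exists>a\<in>M. sat S \<phi> (e(i := a)))"
      using Ex.IH Ex.prems by (auto simp: fun_upd_def)
    also have "\<dots> \<longleftrightarrow> (\<exists>a\<in>univ S. sat S \<phi> (e(i := a)))"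
      using witness Ex.prems sub by blast
    finally show ?case by simp
  qed auto
  then show ?thesis
    unfolding elem_sub_def using assms by blast
qed

definition list_asg :: "'a \<Rightarrow> 'a list \<Rightarrow> nat \<Rightarrow> 'a" where
  "list_asg a0 as j = (if j < length as then as ! j else a0)"

definition tv_witness :: "('a, 'f, 'r) struc \<Rightarrow> 'a \<Rightarrow> ('f, 'r) fm \<Rightarrow> nat \<Rightarrow> 'a list \<Rightarrow> 'a" where
  "tv_witness S a0 \<phi> i as =
    (if \<exists>a\<in>univ S. sat S \<phi> ((list_asg a0 as)(i := a))
     then SOME a. a \<in> univ S \<and> sat S \<phi> ((list_asg a0 as)(i := a)) else a0)"

lemma tv_witness_in_univ: "a0 \<in> univ S \<Longrightarrow> tv_witness S a0 \<phi> i as \<in> univ S"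
  unfolding tv_witness_def by (auto intro: someI2_ex)

lemma sat_tv_witness:
  "\<exists>a\<in>univ S. sat S \<phi> ((list_asg a0 as)(i := a)) \<Longrightarrow>
    sat S \<phi> ((list_asg a0 as)(i := tv_witness S a0 \<phi> i as))"
  unfolding tv_witness_def by (auto intro: someI2_ex)

definition hull_step :: "('a, 'f, 'r) struc \<Rightarrow> 'a \<Rightarrow> 'a set \<Rightarrow> 'a set" where
  "hull_step S a0 B = B \<union> (\<lambda>(f, as). fnc S f as) ` (UNIV \<times> lists B) \<union>
     (\<lambda>(\<phi>, i, as). tv_witness S a0 \<phi> i as) ` (UNIV \<times> UNIV \<times> lists B)"

definition skolem_hull :: "('a, 'f, 'r) struc \<Rightarrow> 'a \<Rightarrow> 'a set \<Rightarrow> 'a set" where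
  "skolem_hull S a0 B = (\<Union>k. (hull_step S a0 ^^ k) B)"

lemma hull_step_subset_univ:
  assumes "wf_struc S" "a0 \<in> univ S" "B \<subseteq> univ S"
  shows "hull_step S a0 B \<subseteq> univ S"
  using assms tv_witness_in_univ unfolding hull_step_def wf_struc_def by fastforce

lemma card_of_hull_step:
  fixes S :: "('a, 'f, 'r) struc"
  assumes L: "\<not> finite L" and "|UNIV :: 'f set| \<le>o |L|" "|UNIV :: ('f, 'r) fm set| \<le>o |L|"
    and B: "|B| \<le>o |L|"
  shows "|hull_step S a0 B| \<le>o |L|"
proof -
  have lists: "|lists B| \<le>o |L|"
    using card_of_lists_le_infinite[OF L B] .
  have "|(\<lambda>(f, as). fnc S f as) ` (UNIV \<times> lists B)| \<le>o |(UNIV :: 'f set) \<times> lists B|"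
    by (rule card_of_image)
  then have fns: "|(\<lambda>(f, as). fnc S f as) ` (UNIV \<times> lists B)| \<le>o |L|"
    using card_of_Times_le_infinite[OF L assms(2) lists] by (rule ordLeq_transitive)
  have "|UNIV :: nat set| \<le>o |L|"
    using L infinite_iff_card_of_nat by blast
  then have "|(UNIV :: ('f, 'r) fm set) \<times> (UNIV :: nat set) \<times> lists B| \<le>o |L|"
    using assms(3) lists by (intro card_of_Times_le_infinite[OF L])
  then have wits: "|(\<lambda>(\<phi>, i, as). tv_witness S a0 \<phi> i as) ` (UNIV \<times> UNIV \<times> lists B)| \<le>o |L|"
    using card_of_image by (rule ordLeq_transitive[rotated])
  show ?thesis
    unfolding hull_step_def using B fns wits by (intro card_of_Un_le_infinite[OF L])
qed

lemma hull_stage_mono: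
  assumes "k \<le> k'"
  shows "(hull_step S a0 ^^ k) B \<subseteq> (hull_step S a0 ^^ k') B"
proof (rule lift_Suc_mono_le[of "\<lambda>k. (hull_step S a0 ^^ k) B", OF _ assms])
  show "(hull_step S a0 ^^ j) B \<subseteq> (hull_step S a0 ^^ Suc j) B" for j
    unfolding funpow.simps o_apply hull_step_def by (rule Un_upper1[THEN subset_trans]) blast
qed

lemma list_in_hull_stage:
  "set as \<subseteq> skolem_hull S a0 B \<Longrightarrow> \<exists>k. set as \<subseteq> (hull_step S a0 ^^ k) B"
proof (induction as)
  case (Cons x xs)
  then obtain k1 k2 where "x \<in> (hull_step S a0 ^^ k1) B" "set xs \<subseteq> (hull_step S a0 ^^ k2) B"
    unfolding skolem_hull_def by auto
  then have "set (x # xs) \<subseteq> (hull_step S a0 ^^ max k1 k2) B"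
    using hull_stage_mono[of k1 "max k1 k2" S a0 B] hull_stage_mono[of k2 "max k1 k2" S a0 B] by auto
  then show ?case ..
qed simp

lemma subset_skolem_hull: "B \<subseteq> skolem_hull S a0 B"
  unfolding skolem_hull_def using UN_upper[of 0 UNIV "\<lambda>k. (hull_step S a0 ^^ k) B"] by simp

lemma hull_step_stage_subset_skolem_hull:
  "hull_step S a0 ((hull_step S a0 ^^ k) B) \<subseteq> skolem_hull S a0 B"
  unfolding skolem_hull_def using UN_upper[of "Suc k" UNIV "\<lambda>k. (hull_step S a0 ^^ k) B"] by simp

lemma elem_sub_skolem_hull:
  fixes S :: "('a, 'f, 'r) struc"
  assumes wf: "wf_struc S" and B: "a0 \<in> B" "B \<subseteq> univ S"
  shows "elem_sub (skolem_hull S a0 B) S"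
proof (rule elem_sub_if_Tarski_Vaught)
  have "a0 \<in> univ S"
    using B by blast
  have "(hull_step S a0 ^^ k) B \<subseteq> univ S" for k
  proof (induction k)
    case (Suc k)
    then show ?case
      using hull_step_subset_univ[OF wf \<open>a0 \<in> univ S\<close>] by simp
  qed (simp add: B(2))
  then show "skolem_hull S a0 B \<subseteq> univ S"
    unfolding skolem_hull_def by blast
  show "skolem_hull S a0 B \<noteq> {}"
    using B(1) subset_skolem_hull[of B S a0] by blast
  show "\<forall>f as. set as \<subseteq> skolem_hull S a0 B \<longrightarrow> fnc S f as \<in> skolem_hull S a0 B"
  proof (intro allI impI)
    fix f as assume "set as \<subseteq> skolem_hull S a0 B"
    then obtain k where "set as \<subseteq> (hull_step S a0 ^^ k) B"
      by (blast dest: list_in_hull_stage)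
    then have "fnc S f as \<in> (\<lambda>(f, as). fnc S f as) ` (UNIV \<times> lists ((hull_step S a0 ^^ k) B))"
      by (intro rev_image_eqI[of "(f, as)"]) auto
    then have "fnc S f as \<in> hull_step S a0 ((hull_step S a0 ^^ k) B)"
      unfolding hull_step_def by (rule UnI1[OF UnI2])
    then show "fnc S f as \<in> skolem_hull S a0 B"
      by (rule subsetD[OF hull_step_stage_subset_skolem_hull])
  qed
  show "\<forall>(\<phi> :: ('f, 'r) fm) i e. (\<forall>j. e j \<in> skolem_hull S a0 B) \<longrightarrow>
      (\<exists>a\<in>univ S. sat S \<phi> (e(i := a))) \<longrightarrow> (\<exists>a\<in>skolem_hull S a0 B. sat S \<phi> (e(i := a)))"
  proof (intro allI impI)
    fix \<phi> :: "('f, 'r) fm" and i e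
    assume e: "\<forall>j. e j \<in> skolem_hull S a0 B" and ex: "\<exists>a\<in>univ S. sat S \<phi> (e(i := a))"
    obtain N where N: "fv \<phi> \<subseteq> {..<N}"
      using finite_nat_iff_bounded[THEN iffD1, OF finite_fv] by blast
    define as where "as = map e [0..<N]"
    have agree: "sat S \<phi> (e(i := a)) \<longleftrightarrow> sat S \<phi> ((list_asg a0 as)(i := a))" for a
      by (rule sat_cong) (use N in \<open>auto simp: list_asg_def as_def\<close>)
    have "set as \<subseteq> skolem_hull S a0 B"
      unfolding as_def using e by auto
    then obtain k where "set as \<subseteq> (hull_step S a0 ^^ k) B"
      by (blast dest: list_in_hull_stage)
    then have "tv_witness S a0 \<phi> i as \<in>
        (\<lambda>(\<phi>, i, as). tv_witness S a0 \<phi> i as) ` (UNIV \<times> UNIV \<times> lists ((hull_step S a0 ^^ k) B))"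
      by (intro rev_image_eqI[of "(\<phi>, i, as)"]) auto
    then have "tv_witness S a0 \<phi> i as \<in> hull_step S a0 ((hull_step S a0 ^^ k) B)"
      unfolding hull_step_def by (rule UnI2)
    then have "tv_witness S a0 \<phi> i as \<in> skolem_hull S a0 B"
      by (rule subsetD[OF hull_step_stage_subset_skolem_hull])
    moreover have "sat S \<phi> (e(i := tv_witness S a0 \<phi> i as))"
      using sat_tv_witness[of S \<phi> a0 as i] ex agree by blast
    ultimately show "\<exists>a\<in>skolem_hull S a0 B. sat S \<phi> (e(i := a))" ..
  qed
qed

lemma card_of_skolem_hull:
  fixes S :: "('a, 'f, 'r) struc"
  assumes L: "\<not> finite L" and f: "|UNIV :: 'f set| \<le>o |L|" and r: "|UNIV :: 'r set| \<le>o |L|"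
    and B: "|B| \<le>o |L|"
  shows "|skolem_hull S a0 B| \<le>o |L|"
proof -
  have "|(hull_step S a0 ^^ k) B| \<le>o |L|" for k
  proof (induction k)
    case (Suc k)
    then show ?case
      using card_of_hull_step[OF L f card_of_fm_le[OF L f r]] by simp
  qed (simp add: B)
  moreover have "|UNIV :: nat set| \<le>o |L|"
    using L infinite_iff_card_of_nat by blast
  ultimately show ?thesis
    unfolding skolem_hull_def by (intro card_of_UNION_ordLeq_infinite[OF L]) auto
qed

theorem downward_Loewenheim_Skolem:
  fixes S :: "('a, 'f, 'r) struc"
  assumes wf: "wf_struc S" and L: "\<not> finite L"
    and f: "|UNIV :: 'f set| \<le>o |L|" and r: "|UNIV :: 'r set| \<le>o |L|"
    and B: "B \<subseteq> univ S" "B \<noteq> {}" "|B| \<le>o |L|"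
  shows "\<exists>M. B \<subseteq> M \<and> elem_sub M S \<and> |M| \<le>o |L|"
proof -
  obtain a0 where "a0 \<in> B"
    using B(2) by blast
  have "B \<subseteq> skolem_hull S a0 B"
    by (rule subset_skolem_hull)
  moreover have "elem_sub (skolem_hull S a0 B) S"
    using wf \<open>a0 \<in> B\<close> B(1) by (rule elem_sub_skolem_hull)
  moreover have "|skolem_hull S a0 B| \<le>o |L|"
    using L f r B(3) by (rule card_of_skolem_hull)
  ultimately show ?thesis
    by blast
qed

fun Conj_list :: "('f, 'r) fm list \<Rightarrow> ('f, 'r) fm" where
  "Conj_list [] = Neg FF"
| "Conj_list (\<phi> # \<phi>s) = Conj \<phi> (Conj_list \<phi>s)"

lemma sat_Conj_list: "sat S (Conj_list \<phi>s) e \<longleftrightarrow> (\<forall>\<phi>\<in>set \<phi>s. sat S \<phi> e)"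
  by (induction \<phi>s) auto

text \<open>A finite elementary substructure is everything: otherwise the sentence saying that
  there is an element different from all of its elements would fail in it but hold in S.\<close>
section \<open>Transfer of finite satisfiability\<close>

lemma finite_elem_sub_univ:
  fixes S :: "('a, 'f, 'r) struc"
  assumes em: "elem_sub M S" and "finite M"
  shows "univ S \<subseteq> M"
proof
  fix x assume x: "x \<in> univ S"
  obtain xs where xs: "set xs = M"
    using finite_list[OF \<open>finite M\<close>] by blast
  obtain a0 where a0: "a0 \<in> M"
    using em unfolding elem_sub_def by blast
  define \<phi> :: "('f, 'r) fm" where
    "\<phi> = Ex 0 (Conj_list (map (\<lambda>j. Neg (Eq (Var 0) (Var (Suc j)))) [0..<length xs]))"
  define e where "e j = (if j = 0 then a0 else if j - 1 < length xs then xs ! (j - 1) else a0)" for j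
  have eM: "\<forall>j. e j \<in> M"
    using a0 xs unfolding e_def by auto
  have sat_\<phi>: "sat T \<phi> e \<longleftrightarrow> (\<exists>a\<in>univ T. \<forall>j<length xs. a \<noteq> xs ! j)" for T :: "('a, 'f, 'r) struc"
    unfolding \<phi>_def by (simp add: sat_Conj_list e_def) (meson atLeastLessThan_iff zero_le)
  have "\<not> sat (S\<lparr>univ := M\<rparr>) \<phi> e"
    unfolding sat_\<phi> using xs by (auto simp: in_set_conv_nth)
  then have "\<not> sat S \<phi> e"
    using em eM unfolding elem_sub_def by blast
  then obtain j where "j < length xs" "x = xs ! j"
    using x unfolding sat_\<phi> by blast
  then show "x \<in> M"
    using xs by auto
qed

lemma fin_sat_in_if_univ_subset:
  assumes "keisler S m (univ S) \<nu>" "univ S \<subseteq> M"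
  shows "fin_sat_in S m M \<nu>"
  unfolding fin_sat_in_def
proof (intro ballI impI)
  fix D assume D: "D \<in> defsets S m (univ S)" "0 < \<nu> D"
  interpret algebra "tup S m" "defsets S m (univ S)"
    by (rule algebra_defsets)
  have "\<nu> {} = 0"
    using assms(1) additive_empty unfolding keisler_def additive_def by blast
  then obtain b where "b \<in> D"
    using D(2) by (cases "D = {}") auto
  moreover have "set b \<subseteq> univ S"
    using \<open>b \<in> D\<close> sets_into_space[OF D(1)] by (auto simp: tup_def)
  ultimately show "\<exists>b\<in>D. set b \<subseteq> M"
    using assms(2) by blast
qed

lemma fin_sat_if_edom:
  fixes K :: "'k set" and S :: "('a, 'f, 'r) struc"
  assumes mon: "monster K S" and \<mu>: "keisler S n (univ S) \<mu>" and \<nu>: "keisler S m (univ S) \<nu>"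
    and fs: "fin_sat K S n \<mu>" and ed: "edom K S n m \<mu> \<nu>"
  shows "fin_sat K S m \<nu>"
proof -
  obtain M1 where M1: "elem_sub M1 S" "small K M1" "fin_sat_in S n M1 \<mu>"
    using fs unfolding fin_sat_def by blast
  obtain A where A: "A \<subseteq> univ S" "small K A" "edom_at S n m A \<mu> \<nu>"
    using ed unfolding edom_def by blast
  have K: "\<not> finite K" and wf: "wf_struc S"
    and fK: "|UNIV :: 'f set| <o |K|" and rK: "|UNIV :: 'r set| <o |K|"
    using mon unfolding monster_def small_def by auto
  have M1U: "M1 \<subseteq> univ S" "M1 \<noteq> {}"
    using M1(1) unfolding elem_sub_def by auto
  show ?thesis
  proof (cases "|UNIV :: nat set| <o |K|")
    case True
    define L where "L = (A \<union> M1) <+> (UNIV :: ('f + 'r + nat) set)"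
    have "|UNIV :: nat set| \<le>o |L|"
      unfolding L_def by (rule card_of_ordLeq[THEN iffD1], rule exI[of _ "\<lambda>k. Inr (Inr (Inr k))"])
        (auto simp: inj_on_def)
    then have L: "\<not> finite L"
      using infinite_iff_card_of_nat by blast
    have "|A \<union> M1| <o |K|"
      using card_of_Un_ordLess_infinite[OF K] A(2) M1(2) unfolding small_def by blast
    moreover have "|UNIV :: ('f + 'r + nat) set| <o |K|"
      using card_of_Plus_ordLess_infinite[OF K fK card_of_Plus_ordLess_infinite[OF K rK True]]
      by simp
    ultimately have LK: "|L| <o |K|"
      unfolding L_def using card_of_Plus_ordLess_infinite[OF K] by blast
    have fL: "|UNIV :: 'f set| \<le>o |L|"
      unfolding L_def by (rule card_of_ordLeq[THEN iffD1], rule exI[of _ "\<lambda>f. Inr (Inl f)"]) (auto simp: inj_on_def)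
    have rL: "|UNIV :: 'r set| \<le>o |L|"
      unfolding L_def by (rule card_of_ordLeq[THEN iffD1], rule exI[of _ "\<lambda>r. Inr (Inr (Inl r))"]) (auto simp: inj_on_def)
    have BL: "|A \<union> M1| \<le>o |L|"
      unfolding L_def by (rule card_of_ordLeq[THEN iffD1], rule exI[of _ Inl]) auto
    have "A \<union> M1 \<subseteq> univ S" "A \<union> M1 \<noteq> {}"
      using A(1) M1U by auto
    then obtain M' where M': "A \<union> M1 \<subseteq> M'" "elem_sub M' S" "|M'| \<le>o |L|"
      using downward_Loewenheim_Skolem[OF wf L fL rL _ _ BL] by blast
    have "small K M'"
      unfolding small_def using ordLeq_ordLess_trans[OF M'(3) LK] .
    moreover have "fin_sat_in S n M' \<mu>"
      using M1(3) M'(1) unfolding fin_sat_in_def by blast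
    then have "fin_sat_in S m M' \<nu>"
      using fin_sat_in_if_edom_at[OF M'(2) _ A(3) \<mu>] M'(1) by blast
    ultimately show ?thesis
      unfolding fin_sat_def using M'(2) by blast
  next
    case False
    text \<open>Then small sets are finite, and a finite elementary substructure is all of S.\<close>
    then have "|K| \<le>o |UNIV :: nat set|"
      using not_ordLess_iff_ordLeq[OF card_of_Well_order card_of_Well_order] by blast
    then have "|M1| <o |UNIV :: nat set|"
      using M1(2) unfolding small_def using ordLess_ordLeq_trans by blast
    then have "finite M1"
      using infinite_iff_card_of_nat not_ordLess_ordLeq by blast
    then have "fin_sat_in S m M1 \<nu>"
      using finite_elem_sub_univ[OF M1(1)] fin_sat_in_if_univ_subset[OF \<nu>] by blast
    then show ?thesis
      unfolding fin_sat_def using M1 by blast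
  qed
qed

theorem theorem4p12:
  fixes K :: "'k set"
    and S :: "('a, 'f, 'r) struc"
    and M :: "'a set"
    and n m :: nat
    and \<mu> \<nu> :: "'a list set \<Rightarrow> real"
  assumes "monster K S"
    and "elem_sub M S" and "small K M"
    and "keisler S n (univ S) \<mu>" and "keisler S m (univ S) \<nu>"
  shows "(fin_sat_in S n M \<mu> \<and> edom_at S n m M \<mu> \<nu> \<longrightarrow> fin_sat_in S m M \<nu>) \<and>
         (fin_sat K S n \<mu> \<and> edom K S n m \<mu> \<nu> \<longrightarrow> fin_sat K S m \<nu>)"
  using fin_sat_in_if_edom_at[OF assms(2) subset_refl _ assms(4)] fin_sat_if_edom[OF assms(1,4,5)]
  by blast

end
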